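(* Let $q$ be a prime power, $\eta\ge0$ an integer with $\eta\neq1$, and $(\delta_T,\delta_X)\in\mathbb{Z}\times\mathbb{N}$ with $\delta=\delta_T+\eta\delta_X\ge0$. Let $F\in R(\delta_T,\delta_X)$ be a polynomial that does not vanish at all $\mathbb{F}_q$-rational points of $\mathcal{H}_\eta$, and let $\mathcal{C}=\mathcal{Z}(F)$ (a non-filling curve of class $\delta_T\mathcal{F}+\delta_X\sigma$). Then: If $\eta\ge2$: (i) if $q>\delta$: $\#\mathcal{C}(\mathbb{F}_q)\le(q+1)\delta_T$ if $\delta_X=0$ and $\delta_T\ge0$, and $\#\mathcal{C}(\mathbb{F}_q)\le q(\delta+1)+1$ otherwise; (ii) if $\max\big(\frac{\delta}{\eta+1},\delta_T\big)<q\le\delta$: $\#\mathcal{C}(\mathbb{F}_q)\le q^2+q+1+\big\lfloor\frac{\delta-q}{\eta}\big\rfloor$; (iii) if $q\le\max\big(\frac{\delta}{\eta+1},\delta_T\big)$ and $q\ge\delta_X$: $\#\mathcal{C}(\mathbb{F}_q)\le q^2+q+\delta_X$. If $\eta=0$: $\#\mathcal{C}(\mathbb{F}_q)\le(q+1)^2-\max(q-\delta_X+1,1)\max(q-\delta_T+1,1)$. Moreover, in each case the bound is attained by some such $F$.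
   Context: $R=\mathbb{F}_q[T_1,T_2,X_1,X_2]$; the bidegree of $T_1^{c_1}T_2^{c_2}X_1^{d_1}X_2^{d_2}$ is $(c_1+c_2-\eta d_1,d_1+d_2)$; $R(\delta_T,\delta_X)$ is the span of monomials of that bidegree. The Hirzebruch surface $\mathcal{H}_\eta$ is the quotient of $(\mathbb{A}^2\setminus\{0\})^2$ by $\mathbb{G}_m^2$ acting by $(\lambda,\mu)\cdot(t_1,t_2,x_1,x_2)=(\lambda t_1,\lambda t_2,\mu\lambda^{-\eta}x_1,\mu x_2)$; its $\mathbb{F}_q$-points ($(q+1)^2$ of them) each have a unique representative $(1,a,1,b)$, $(0,1,1,b)$, $(1,a,0,1)$ or $(0,1,0,1)$ ($a,b\in\mathbb{F}_q$), where polynomials are evaluated. $\#\mathcal{C}(\mathbb{F}_q)$ is the number of $\mathbb{F}_q$-points $P$ with $F(P)=0$. $\mathcal{F}$ and $\sigma$ denote the classes of the fiber and section generating $\mathrm{Pic}\,\mathcal{H}_\eta$; a polynomial in $R(\delta_T,\delta_X)$ defines a curve of class $\delta_T\mathcal{F}+\delta_X\sigma$. *)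

theory Defs
  imports Complex_Main
begin

text \<open>Monomials T1^c1 T2^c2 X1^d1 X2^d2 are encoded by exponent tuples (c1,c2,d1,d2).
  A polynomial of R = F_q[T1,T2,X1,X2] is encoded by its coefficient function.\<close>

type_synonym expo = "nat \<times> nat \<times> nat \<times> nat"

definition bideg :: "nat \<Rightarrow> expo \<Rightarrow> int \<times> nat" where
  "bideg \<eta> m = (case m of (c1, c2, d1, d2) \<Rightarrow>
      (int c1 + int c2 - int \<eta> * int d1, d1 + d2))"

definition in_R :: "nat \<Rightarrow> int \<Rightarrow> nat \<Rightarrow> (expo \<Rightarrow> 'a::zero) \<Rightarrow> bool" where
  "in_R \<eta> dT dX F \<longleftrightarrow> (\<forall>m. F m \<noteq> 0 \<longrightarrow> bideg \<eta> m = (dT, dX))"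

definition eval_poly :: "(expo \<Rightarrow> 'a::comm_ring_1) \<Rightarrow> 'a \<times> 'a \<times> 'a \<times> 'a \<Rightarrow> 'a" where
  "eval_poly F P = (case P of (t1, t2, x1, x2) \<Rightarrow>
      (\<Sum>m\<in>{m. F m \<noteq> 0}. case m of (c1, c2, d1, d2) \<Rightarrow>
          F m * t1 ^ c1 * t2 ^ c2 * x1 ^ d1 * x2 ^ d2))"

text \<open>Canonical representatives of the rational points of the Hirzebruch surface.\<close>
definition hirz_points :: "('a::comm_ring_1 \<times> 'a \<times> 'a \<times> 'a) set" where
  "hirz_points =
     {(1, a, 1, b) | a b. True} \<union> {(0, 1, 1, b) | b. True} \<union>
     {(1, a, 0, 1) | a. True} \<union> {(0, 1, 0, 1)}"

definition num_points :: "(expo \<Rightarrow> 'a::comm_ring_1) \<Rightarrow> nat" where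
  "num_points F = card {P \<in> hirz_points. eval_poly F P = 0}"

definition non_filling :: "(expo \<Rightarrow> 'a::comm_ring_1) \<Rightarrow> bool" where
  "non_filling F \<longleftrightarrow> (\<exists>P\<in>hirz_points. eval_poly F P \<noteq> 0)"

definition sharp_bound :: "'a::{field,finite} itself \<Rightarrow> nat \<Rightarrow> int \<Rightarrow> nat \<Rightarrow> int \<Rightarrow> bool" where
  "sharp_bound _ \<eta> dT dX B \<longleftrightarrow>
     (\<forall>F :: expo \<Rightarrow> 'a. in_R \<eta> dT dX F \<and> non_filling F \<longrightarrow> int (num_points F) \<le> B) \<and>
     (\<exists>F :: expo \<Rightarrow> 'a. in_R \<eta> dT dX F \<and> non_filling F \<and> int (num_points F) = B)"

end

theory Submission
  imports Defs "HOL-Computational_Algebra.Polynomial"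
begin

(* The rational points of H_eta are the pairs (t, x) of points of the projective line, and F in
   R(dT, dX) is a form of degree dX in X whose coefficient of X1^j X2^(dX - j) is a binary form of
   degree dT + eta j in T.  The upper bounds count points fibre by fibre over t: a fibre on which F
   does not vanish identically carries at most dX points, and only the fibres over the zeros of a
   single nonzero binary form in T (the lowest nonvanishing coefficient, or F restricted to a
   section) can carry more.  In the middle range the affine degree of a fibre may reach q; the
   fibre equation is then first reduced by y^q = y, and the lowest coefficient surviving in the top
   degrees bounds the affine points of every fibre on which it is nonzero.  The bounds are attained
   by F = X1^k p(T) r(T2^eta X1, X2) with p and r products of distinct linear factors: every fibre
   is then either contained in the curve or meets it in the roots of r, plus the point at infinity
   when k > 0. *)

section \<open>The projective line and binary forms\<close>

definition proj_line :: "('a::comm_ring_1 \<times> 'a) set" where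
  "proj_line = range (\<lambda>a. (1, a)) \<union> {(0, 1)}"

lemma proj_line_affine [simp]: "(1, a) \<in> proj_line"
  and proj_line_infinity [simp]: "(0, 1) \<in> proj_line"
  unfolding proj_line_def by auto

lemma proj_line_cases [consumes 1, case_names affine infinity]:
  assumes "t \<in> proj_line"
  obtains a where "t = (1, a)" | "t = (0, 1)"
  using assms unfolding proj_line_def by auto

lemma finite_proj_line [simp]: "finite (proj_line :: ('a::{comm_ring_1,finite} \<times> 'a) set)"
  unfolding proj_line_def by simp

lemma card_proj_line_zeros:
  fixes f :: "'a::{field,finite} \<times> 'a \<Rightarrow> 'b::zero"
  shows "card {t \<in> proj_line. f t = 0} = card {a. f (1, a) = 0} + (if f (0, 1) = 0 then 1 else 0)"
proof -
  have e: "{t \<in> proj_line. f t = 0} =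
      (\<lambda>a. (1, a)) ` {a. f (1, a) = 0} \<union> (if f (0, 1) = 0 then {(0, 1)} else {})"
    unfolding proj_line_def by auto
  have "card ((\<lambda>a. (1::'a, a)) ` {a. f (1, a) = 0}) = card {a. f (1, a) = 0}"
    by (rule card_image) (auto simp: inj_on_def)
  moreover have "(0, 1) \<notin> (\<lambda>a. (1::'a, a)) ` {a. f (1, a) = 0}" by auto
  ultimately show ?thesis unfolding e by (auto simp: card_insert_if)
qed

lemma card_proj_line: "card (proj_line :: ('a::{field,finite} \<times> 'a) set) = card (UNIV :: 'a set) + 1"
  using card_proj_line_zeros[of "\<lambda>_::'a \<times> 'a. 0::nat"] by simp

lemma card_proj_line_Collect_le:
  "card {t \<in> (proj_line :: ('a::{field,finite} \<times> 'a) set). P t} \<le> card (UNIV :: 'a set) + 1"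
  using card_mono[OF finite_proj_line, of "{t \<in> proj_line. P t}"] by (simp add: card_proj_line)

lemma card_proj_line_Collect_less:
  assumes "t0 \<in> proj_line" "\<not> P t0"
  shows "card {t \<in> (proj_line :: ('a::{field,finite} \<times> 'a) set). P t} \<le> card (UNIV :: 'a set)"
proof -
  have "{t \<in> proj_line. P t} \<subset> proj_line" using assms by auto
  then have "card {t \<in> proj_line. P t} < card (proj_line :: ('a \<times> 'a) set)"
    by (rule psubset_card_mono[OF finite_proj_line])
  then show ?thesis by (simp add: card_proj_line)
qed

lemma card_Collect_le_card_UNIV: "card {y :: 'a::finite. P y} \<le> card (UNIV :: 'a set)"
  by (rule card_mono) auto

lemma card_UNIV_field_ge2: "2 \<le> card (UNIV :: 'a::{field,finite} set)"
proof -
  have "card {0::'a, 1} \<le> card (UNIV :: 'a set)" by (rule card_mono) auto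
  then show ?thesis by simp
qed

definition homog :: "nat \<Rightarrow> 'a::comm_ring_1 poly \<Rightarrow> 'a \<times> 'a \<Rightarrow> 'a" where
  "homog n p t = (\<Sum>i\<le>n. coeff p i * fst t ^ (n - i) * snd t ^ i)"

lemma poly_eq_sum_atMost:
  fixes p :: "'a::comm_ring_1 poly"
  assumes "degree p \<le> n"
  shows "poly p a = (\<Sum>i\<le>n. coeff p i * a ^ i)"
proof -
  have "poly p a = (\<Sum>i\<le>degree p. coeff p i * a ^ i)" by (rule poly_altdef)
  also have "\<dots> = (\<Sum>i\<le>n. coeff p i * a ^ i)"
    by (rule sum.mono_neutral_left) (use assms in \<open>auto simp: coeff_eq_0\<close>)
  finally show ?thesis .
qed

lemma homog_affine: "degree p \<le> n \<Longrightarrow> homog n p (1, a) = poly p a"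
  unfolding homog_def by (simp add: poly_eq_sum_atMost)

lemma homog_infinity: "homog n p (0, 1) = coeff p n"
proof -
  have "homog n p (0, 1) = (\<Sum>i\<le>n. if i = n then coeff p i else 0)"
    unfolding homog_def by (rule sum.cong) (auto simp: power_0_left)
  then show ?thesis by simp
qed

lemma card_homog_zeros:
  fixes p :: "'a::{field,finite} poly"
  assumes "degree p \<le> n"
  shows "card {t \<in> proj_line. homog n p t = 0} = card {a. poly p a = 0} + (if coeff p n = 0 then 1 else 0)"
  using card_proj_line_zeros[of "homog n p"] assms by (simp add: homog_affine homog_infinity)

lemma card_homog_zeros_le:
  fixes p :: "'a::{field,finite} poly"
  assumes "degree p \<le> n" "t0 \<in> proj_line" "homog n p t0 \<noteq> 0"
  shows "card {t \<in> proj_line. homog n p t = 0} \<le> n"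
proof -
  have "p \<noteq> 0" using assms(3) by (auto simp: homog_def)
  then have roots: "card {a. poly p a = 0} \<le> degree p" by (rule card_poly_roots_bound)
  show ?thesis
  proof (cases "coeff p n = 0")
    case True
    with \<open>p \<noteq> 0\<close> assms(1) have "degree p < n" using le_neq_implies_less by fastforce
    then show ?thesis using roots True by (simp add: card_homog_zeros[OF assms(1)])
  next
    case False
    then show ?thesis using roots assms(1) by (simp add: card_homog_zeros[OF assms(1)])
  qed
qed

lemma homog_sum_smult:
  "homog n (\<Sum>j\<in>S. smult (c j) (p j)) t = (\<Sum>j\<in>S. c j * homog n (p j) t)"
  unfolding homog_def coeff_sum coeff_smult
  by (simp add: sum_distrib_left sum_distrib_right mult_ac) (rule sum.swap)

lemma homog_sum_monom:
  "homog n (\<Sum>i\<le>n. monom (c i) i) t = (\<Sum>i\<le>n. c i * fst t ^ (n - i) * snd t ^ i)"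
  unfolding homog_def coeff_sum coeff_monom by (rule sum.cong) auto

definition binary_form :: "nat \<Rightarrow> ('a::comm_ring_1 \<times> 'a \<Rightarrow> 'a) \<Rightarrow> bool" where
  "binary_form n h \<longleftrightarrow> (\<exists>p. degree p \<le> n \<and> h = homog n p)"

lemma binary_form_monomials: "binary_form n (\<lambda>t. \<Sum>i\<le>n. c i * fst t ^ (n - i) * snd t ^ i)"
  unfolding binary_form_def
  by (intro exI[of _ "\<Sum>i\<le>n. monom (c i) i"] conjI degree_sum_le)
     (auto simp: homog_sum_monom intro: order.trans[OF degree_monom_le])

lemma binary_form_monomials_rev: "binary_form n (\<lambda>t. \<Sum>i\<le>n. c i * fst t ^ i * snd t ^ (n - i))"
proof -
  have "(\<Sum>i\<le>n. c i * fst t ^ i * snd t ^ (n - i)) = (\<Sum>i\<le>n. c (n - i) * fst t ^ (n - i) * snd t ^ i)"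
    for t :: "'a \<times> 'a"
    using sum.atLeastAtMost_rev[of "\<lambda>i. c i * fst t ^ i * snd t ^ (n - i)" 0 n]
    by (simp add: atLeast0AtMost)
  then show ?thesis using binary_form_monomials[of n "\<lambda>i. c (n - i)"] by simp
qed

lemma binary_form_sum:
  assumes "finite S" "\<And>j. j \<in> S \<Longrightarrow> binary_form n (h j)"
  shows "binary_form n (\<lambda>t. \<Sum>j\<in>S. c j * h j t)"
proof -
  obtain p where p: "\<And>j. j \<in> S \<Longrightarrow> degree (p j) \<le> n \<and> h j = homog n (p j)"
    using assms(2) unfolding binary_form_def by metis
  show ?thesis unfolding binary_form_def
    by (intro exI[of _ "\<Sum>j\<in>S. smult (c j) (p j)"] conjI degree_sum_le)
       (use assms(1) p in \<open>auto simp: homog_sum_smult intro: order.trans[OF degree_smult_le]\<close>)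
qed

lemma binary_form_card_zeros_le:
  fixes h :: "'a::{field,finite} \<times> 'a \<Rightarrow> 'a"
  assumes "binary_form n h" "t0 \<in> proj_line" "h t0 \<noteq> 0"
  shows "card {t \<in> proj_line. h t = 0} \<le> n"
  using assms card_homog_zeros_le unfolding binary_form_def by blast

section \<open>Points of the Hirzebruch surface and fibres over the T-line\<close>

definition hirz_pt :: "'a \<times> 'a \<Rightarrow> 'a \<times> 'a \<Rightarrow> 'a \<times> 'a \<times> 'a \<times> 'a" where
  "hirz_pt t x = (fst t, snd t, fst x, snd x)"

lemma hirz_points_eq_image: "hirz_points = (\<lambda>(t, x). hirz_pt t x) ` (proj_line \<times> proj_line)"
proof
  show "hirz_points \<subseteq> (\<lambda>(t, x). hirz_pt t x) ` (proj_line \<times> proj_line)"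
  proof
    fix P assume "P \<in> hirz_points"
    then consider a b where "P = (1, a, 1, b)" | b where "P = (0, 1, 1, b)"
      | a where "P = (1, a, 0, 1)" | "P = (0, 1, 0, 1)"
      unfolding hirz_points_def by blast
    then show "P \<in> (\<lambda>(t, x). hirz_pt t x) ` (proj_line \<times> proj_line)"
    proof cases
      case (1 a b) then show ?thesis by (intro rev_image_eqI[of "((1, a), (1, b))"]) (auto simp: hirz_pt_def)
    next
      case (2 b) then show ?thesis by (intro rev_image_eqI[of "((0, 1), (1, b))"]) (auto simp: hirz_pt_def)
    next
      case (3 a) then show ?thesis by (intro rev_image_eqI[of "((1, a), (0, 1))"]) (auto simp: hirz_pt_def)
    next
      case 4 then show ?thesis by (intro rev_image_eqI[of "((0, 1), (0, 1))"]) (auto simp: hirz_pt_def)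
    qed
  qed
  show "(\<lambda>(t, x). hirz_pt t x) ` (proj_line \<times> proj_line) \<subseteq> hirz_points"
    unfolding hirz_points_def proj_line_def hirz_pt_def by auto
qed

lemma inj_on_hirz_pt: "inj_on (\<lambda>(t, x). hirz_pt t x) A"
  by (auto simp: inj_on_def hirz_pt_def prod_eq_iff)

definition eval_at :: "(expo \<Rightarrow> 'a::comm_ring_1) \<Rightarrow> 'a \<times> 'a \<Rightarrow> 'a \<times> 'a \<Rightarrow> 'a" where
  "eval_at F t x = eval_poly F (hirz_pt t x)"

lemma num_points_eq_sum_fibres:
  fixes F :: "expo \<Rightarrow> 'a::{field,finite}"
  shows "num_points F = (\<Sum>t\<in>proj_line. card {x \<in> proj_line. eval_at F t x = 0})"
proof -
  have "{P \<in> hirz_points. eval_poly F P = 0} =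
      (\<lambda>(t, x). hirz_pt t x) ` (SIGMA t:proj_line. {x \<in> proj_line. eval_at F t x = 0})"
    unfolding hirz_points_eq_image eval_at_def by auto
  then have "num_points F = card (SIGMA t:proj_line. {x \<in> proj_line. eval_at F t x = 0})"
    unfolding num_points_def by (simp add: card_image inj_on_hirz_pt)
  also have "\<dots> = (\<Sum>t\<in>proj_line. card {x \<in> proj_line. eval_at F t x = 0})"
    by (rule card_SigmaI) auto
  finally show ?thesis .
qed

lemma non_filling_iff_eval_at:
  "non_filling F \<longleftrightarrow> (\<exists>t\<in>proj_line. \<exists>x\<in>proj_line. eval_at F t x \<noteq> 0)"
  unfolding non_filling_def hirz_points_eq_image eval_at_def by auto

lemma num_points_le_square:
  fixes F :: "expo \<Rightarrow> 'a::{field,finite}"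
  shows "num_points F \<le> (card (UNIV :: 'a set) + 1) * (card (UNIV :: 'a set) + 1)"
proof -
  have "num_points F \<le> (\<Sum>t\<in>(proj_line :: ('a \<times> 'a) set). card (UNIV :: 'a set) + 1)"
    unfolding num_points_eq_sum_fibres by (intro sum_mono card_proj_line_Collect_le)
  then show ?thesis by (simp add: card_proj_line)
qed

text \<open>An element F of R(dT, dX) is the sum over j \<le> dX of xcoeff j * X1^j * X2^(dX - j), where
  xcoeff j is a binary form in T of degree dT + \<eta> j, and is zero when this degree is negative.\<close>

definition xcoeff_deg :: "nat \<Rightarrow> int \<Rightarrow> nat \<Rightarrow> nat" where
  "xcoeff_deg \<eta> dT j = nat (dT + int \<eta> * int j)"

definition xcoeff :: "nat \<Rightarrow> int \<Rightarrow> nat \<Rightarrow> (expo \<Rightarrow> 'a::comm_ring_1) \<Rightarrow> nat \<Rightarrow> 'a \<times> 'a \<Rightarrow> 'a" where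
  "xcoeff \<eta> dT dX F j t =
    (if 0 \<le> dT + int \<eta> * int j then
      (\<Sum>i\<le>xcoeff_deg \<eta> dT j. F (xcoeff_deg \<eta> dT j - i, i, j, dX - j) *
          fst t ^ (xcoeff_deg \<eta> dT j - i) * snd t ^ i)
     else 0)"

lemma xcoeff_neg: "dT + int \<eta> * int j < 0 \<Longrightarrow> xcoeff \<eta> dT dX F j t = 0"
  unfolding xcoeff_def by simp

lemma binary_form_xcoeff:
  "0 \<le> dT + int \<eta> * int j \<Longrightarrow> binary_form (xcoeff_deg \<eta> dT j) (xcoeff \<eta> dT dX F j)"
  unfolding xcoeff_def by (simp add: binary_form_monomials)

lemma eval_poly_eq_sum_xcoeff:
  fixes F :: "expo \<Rightarrow> 'a::comm_ring_1"
  assumes F: "in_R \<eta> dT dX F"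
  shows "eval_poly F (t1, t2, x1, x2) = (\<Sum>j\<le>dX. xcoeff \<eta> dT dX F j (t1, t2) * x1 ^ j * x2 ^ (dX - j))"
proof -
  define J where "J = {j. j \<le> dX \<and> 0 \<le> dT + int \<eta> * int j}"
  define I where "I = (SIGMA j:J. {..xcoeff_deg \<eta> dT j})"
  define mon where "mon = (\<lambda>(j, i). (xcoeff_deg \<eta> dT j - i, i, j, dX - j))"
  define g where "g = (\<lambda>m. case m of (c1, c2, d1, d2) \<Rightarrow> F m * t1 ^ c1 * t2 ^ c2 * x1 ^ d1 * x2 ^ d2)"
  have "finite J" unfolding J_def by auto
  then have "finite I" unfolding I_def by auto
  have support: "{m. F m \<noteq> 0} \<subseteq> mon ` I"
  proof
    fix m assume "m \<in> {m. F m \<noteq> 0}"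
    then have "bideg \<eta> m = (dT, dX)" using F unfolding in_R_def by blast
    moreover obtain c1 c2 d1 d2 where m: "m = (c1, c2, d1, d2)" by (cases m)
    ultimately have "int c1 + int c2 - int \<eta> * int d1 = dT" "d1 + d2 = dX"
      unfolding bideg_def by auto
    then have "(d1, c2) \<in> I" "mon (d1, c2) = m"
      unfolding I_def J_def mon_def m xcoeff_deg_def by auto
    then show "m \<in> mon ` I" by (metis image_eqI)
  qed
  have "inj_on mon I" unfolding inj_on_def mon_def I_def by auto
  have "eval_poly F (t1, t2, x1, x2) = sum g {m. F m \<noteq> 0}"
    unfolding eval_poly_def g_def by simp
  also have "\<dots> = sum g (mon ` I)"
    by (rule sum.mono_neutral_left) (use \<open>finite I\<close> support in \<open>auto simp: g_def split: prod.splits\<close>)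
  also have "\<dots> = sum (g \<circ> mon) I" by (rule sum.reindex[OF \<open>inj_on mon I\<close>])
  also have "\<dots> = (\<Sum>j\<in>J. \<Sum>i\<le>xcoeff_deg \<eta> dT j. g (mon (j, i)))"
    unfolding I_def by (subst sum.Sigma) (use \<open>finite J\<close> in auto)
  also have "\<dots> = (\<Sum>j\<in>J. xcoeff \<eta> dT dX F j (t1, t2) * x1 ^ j * x2 ^ (dX - j))"
    by (rule sum.cong) (auto simp: J_def xcoeff_def g_def mon_def sum_distrib_left sum_distrib_right mult_ac)
  also have "\<dots> = (\<Sum>j\<le>dX. xcoeff \<eta> dT dX F j (t1, t2) * x1 ^ j * x2 ^ (dX - j))"
    by (rule sum.mono_neutral_left) (auto simp: J_def xcoeff_def)
  finally show ?thesis .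
qed

lemma eval_at_eq_sum_xcoeff:
  "in_R \<eta> dT dX F \<Longrightarrow> eval_at F t x = (\<Sum>j\<le>dX. xcoeff \<eta> dT dX F j t * fst x ^ j * snd x ^ (dX - j))"
  unfolding eval_at_def hirz_pt_def
  using eval_poly_eq_sum_xcoeff[of \<eta> dT dX F "fst t" "snd t" "fst x" "snd x"] by simp

lemma eval_at_infinity: "in_R \<eta> dT dX F \<Longrightarrow> eval_at F t (0, 1) = xcoeff \<eta> dT dX F 0 t"
  by (simp add: eval_at_eq_sum_xcoeff power_0_left sum.atMost_shift)

lemma eval_at_affine:
  "in_R \<eta> dT dX F \<Longrightarrow> eval_at F t (1, y) = (\<Sum>j\<le>dX. xcoeff \<eta> dT dX F j t * y ^ (dX - j))"
  by (simp add: eval_at_eq_sum_xcoeff)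

lemma binary_form_eval_at_fibre:
  assumes "in_R \<eta> dT dX F"
  shows "binary_form dX (eval_at F t)"
proof -
  have "eval_at F t = (\<lambda>x. \<Sum>j\<le>dX. xcoeff \<eta> dT dX F j t * fst x ^ j * snd x ^ (dX - j))"
    using eval_at_eq_sum_xcoeff[OF assms] by blast
  then show ?thesis by (simp add: binary_form_monomials_rev)
qed

lemma binary_form_eval_at_section:
  assumes "in_R 0 dT dX F" "0 \<le> dT"
  shows "binary_form (nat dT) (\<lambda>t. eval_at F t x)"
proof -
  have "binary_form (nat dT) (\<lambda>t. \<Sum>j\<le>dX. (fst x ^ j * snd x ^ (dX - j)) * xcoeff 0 dT dX F j t)"
    using binary_form_xcoeff[of dT 0] assms(2) by (intro binary_form_sum) (auto simp: xcoeff_deg_def)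
  then show ?thesis by (simp add: eval_at_eq_sum_xcoeff[OF assms(1)] mult_ac)
qed

lemma num_points_eq_infinity_plus_affine:
  fixes F :: "expo \<Rightarrow> 'a::{field,finite}"
  assumes "in_R \<eta> dT dX F"
  shows "num_points F = card {t \<in> proj_line. xcoeff \<eta> dT dX F 0 t = 0}
    + (\<Sum>t\<in>proj_line. card {y. eval_at F t (1, y) = 0})"
proof -
  have "num_points F = (\<Sum>t\<in>proj_line. card {y. eval_at F t (1, y) = 0}
      + (if xcoeff \<eta> dT dX F 0 t = 0 then 1 else 0))"
    unfolding num_points_eq_sum_fibres
    by (rule sum.cong) (auto simp: card_proj_line_zeros eval_at_infinity[OF assms])
  also have "\<dots> = (\<Sum>t\<in>proj_line. card {y. eval_at F t (1, y) = 0})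
      + card {t \<in> proj_line. xcoeff \<eta> dT dX F 0 t = 0}"
    by (simp add: sum.distrib sum.If_cases Int_def)
  finally show ?thesis by simp
qed

definition lowest_xcoeff :: "nat \<Rightarrow> int \<Rightarrow> nat \<Rightarrow> (expo \<Rightarrow> 'a::comm_ring_1) \<Rightarrow> nat \<Rightarrow> bool" where
  "lowest_xcoeff \<eta> dT dX F v \<longleftrightarrow> v \<le> dX \<and>
     (\<forall>j<v. \<forall>t\<in>proj_line. xcoeff \<eta> dT dX F j t = 0) \<and> (\<exists>t\<in>proj_line. xcoeff \<eta> dT dX F v t \<noteq> 0)"

lemma lowest_xcoeff_exists:
  fixes F :: "expo \<Rightarrow> 'a::{field,finite}"
  assumes F: "in_R \<eta> dT dX F" and nf: "non_filling F"
  shows "\<exists>v. lowest_xcoeff \<eta> dT dX F v"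
proof -
  let ?P = "\<lambda>j. j \<le> dX \<and> (\<exists>t\<in>proj_line. xcoeff \<eta> dT dX F j t \<noteq> 0)"
  have "\<exists>j. ?P j"
  proof (rule ccontr)
    assume "\<nexists>j. ?P j"
    then have "\<forall>t\<in>proj_line. \<forall>x\<in>proj_line. eval_at F t x = 0"
      by (simp add: eval_at_eq_sum_xcoeff[OF F])
    with nf show False by (simp add: non_filling_iff_eval_at)
  qed
  then have "?P (LEAST j. ?P j)" by (rule LeastI_ex)
  moreover have "\<forall>j < (LEAST j. ?P j). \<forall>t\<in>proj_line. xcoeff \<eta> dT dX F j t = 0"
    using not_less_Least calculation by fastforce
  ultimately show ?thesis unfolding lowest_xcoeff_def by blast
qed

lemma lowest_xcoeff_deg_nonneg: "lowest_xcoeff \<eta> dT dX F v \<Longrightarrow> 0 \<le> dT + int \<eta> * int v"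
  unfolding lowest_xcoeff_def using xcoeff_neg by force

lemma xcoeff_deg_add:
  assumes "0 \<le> dT + int \<eta> * int v"
  shows "int (xcoeff_deg \<eta> dT (v + m)) = int (xcoeff_deg \<eta> dT v) + int \<eta> * int m"
proof -
  have "int \<eta> * int v \<le> int \<eta> * int (v + m)" by (intro mult_left_mono) auto
  with assms have "int (xcoeff_deg \<eta> dT (v + m)) = dT + int \<eta> * int (v + m)"
    by (simp add: xcoeff_deg_def)
  also have "\<dots> = int (xcoeff_deg \<eta> dT v) + int \<eta> * int m"
    using assms by (simp add: xcoeff_deg_def algebra_simps)
  finally show ?thesis .
qed

lemma lowest_xcoeff_degree_split:
  assumes "lowest_xcoeff \<eta> dT dX F v"
  shows "int (xcoeff_deg \<eta> dT v) + int \<eta> * int (dX - v) = dT + int \<eta> * int dX"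
  using assms lowest_xcoeff_deg_nonneg[OF assms]
  by (simp add: xcoeff_deg_def lowest_xcoeff_def of_nat_diff algebra_simps)

lemma card_xcoeff_zeros_le:
  fixes F :: "expo \<Rightarrow> 'a::{field,finite}"
  assumes "lowest_xcoeff \<eta> dT dX F v"
  shows "card {t \<in> proj_line. xcoeff \<eta> dT dX F v t = 0} \<le> min (xcoeff_deg \<eta> dT v) (card (UNIV :: 'a set))"
proof -
  obtain t0 where "t0 \<in> proj_line" "xcoeff \<eta> dT dX F v t0 \<noteq> 0"
    using assms unfolding lowest_xcoeff_def by blast
  then show ?thesis
    using binary_form_card_zeros_le[OF binary_form_xcoeff[where dX = dX and F = F, OF lowest_xcoeff_deg_nonneg[OF assms]]]
      card_proj_line_Collect_less[of t0 "\<lambda>t. xcoeff \<eta> dT dX F v t = 0"] by auto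
qed

lemma coeff_sum_monom_rev:
  "coeff (\<Sum>j\<le>N. monom (c j) (N - j)) k = (if k \<le> N then c (N - k) else 0)"
proof -
  have "coeff (\<Sum>j\<le>N. monom (c j) (N - j)) k = (\<Sum>j\<le>N. if j = N - k \<and> k \<le> N then c j else 0)"
    unfolding coeff_sum coeff_monom by (rule sum.cong) auto
  then show ?thesis by (auto simp: sum.delta)
qed

lemma card_zeros_sum_powers_le:
  fixes c :: "nat \<Rightarrow> 'a::{field,finite}"
  assumes "\<And>j. j < v \<Longrightarrow> c j = 0" "v \<le> N" "c v \<noteq> 0"
  shows "card {y. (\<Sum>j\<le>N. c j * y ^ (N - j)) = 0} \<le> N - v"
proof -
  let ?p = "\<Sum>j\<le>N. monom (c j) (N - j)"
  have "coeff ?p (N - v) \<noteq> 0" using assms by (simp add: coeff_sum_monom_rev)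
  then have "?p \<noteq> 0" by auto
  have "degree ?p \<le> N - v"
    by (rule degree_le) (use assms(1) in \<open>auto simp: coeff_sum_monom_rev\<close>)
  moreover have "card {y. poly ?p y = 0} \<le> degree ?p" by (rule card_poly_roots_bound) fact
  ultimately show ?thesis by (simp add: poly_sum poly_monom)
qed

lemma card_affine_zeros_le:
  fixes F :: "expo \<Rightarrow> 'a::{field,finite}"
  assumes "in_R \<eta> dT dX F" "v \<le> dX" "\<And>j. j < v \<Longrightarrow> xcoeff \<eta> dT dX F j t = 0"
    "xcoeff \<eta> dT dX F v t \<noteq> 0"
  shows "card {y. eval_at F t (1, y) = 0} \<le> dX - v"
  unfolding eval_at_affine[OF assms(1)] by (rule card_zeros_sum_powers_le) (use assms in auto)

section \<open>Upper bounds from counting along fibres\<close>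

lemma sum_le_two_bounds:
  fixes f :: "'b \<Rightarrow> nat"
  assumes "finite A" "R \<subseteq> A" "card R \<le> w" "w \<le> card A"
    "\<And>t. t \<in> R \<Longrightarrow> f t \<le> hi" "\<And>t. t \<in> A - R \<Longrightarrow> f t \<le> lo" "lo \<le> hi"
  shows "sum f A \<le> w * hi + (card A - w) * lo"
proof -
  have "sum f A = sum f R + sum f (A - R)"
    using sum.subset_diff[OF assms(2,1), of f] by (simp add: add.commute)
  also have "\<dots> \<le> card R * hi + card (A - R) * lo"
    using sum_mono[of R f "\<lambda>_. hi"] sum_mono[of "A - R" f "\<lambda>_. lo"] assms(5,6) by (intro add_mono) auto
  also have "card (A - R) = card A - card R"
    using assms(1,2) by (simp add: card_Diff_subset finite_subset)
  also have "card R * hi + (card A - card R) * lo \<le> w * hi + (card A - w) * lo"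
  proof -
    obtain k where k: "w = card R + k" using assms(3) le_Suc_ex by blast
    have "card A - card R = (card A - w) + k" using k assms(4) by simp
    moreover have "k * lo \<le> k * hi" using assms(7) by (rule mult_le_mono2)
    ultimately show ?thesis using k by (simp add: algebra_simps)
  qed
  finally show ?thesis .
qed

lemma num_points_le_by_fibres:
  fixes F :: "expo \<Rightarrow> 'a::{field,finite}"
  defines "q \<equiv> card (UNIV :: 'a set)"
  assumes "card {t \<in> proj_line. \<forall>x\<in>proj_line. eval_at F t x = 0} \<le> z" "z \<le> q + 1"
    and "\<And>t. t \<in> proj_line \<Longrightarrow> \<exists>x\<in>proj_line. eval_at F t x \<noteq> 0 \<Longrightarrow>
      card {x \<in> proj_line. eval_at F t x = 0} \<le> b"
    and "b \<le> q + 1"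
  shows "num_points F \<le> z * (q + 1) + (q + 1 - z) * b"
proof -
  have "(\<Sum>t\<in>proj_line. card {x \<in> proj_line. eval_at F t x = 0})
      \<le> z * (q + 1) + (card (proj_line :: ('a \<times> 'a) set) - z) * b"
    by (rule sum_le_two_bounds[where R = "{t \<in> proj_line. \<forall>x\<in>proj_line. eval_at F t x = 0}"])
      (use assms card_proj_line_Collect_le in \<open>auto simp: card_proj_line\<close>)
  then show ?thesis by (simp add: num_points_eq_sum_fibres card_proj_line q_def)
qed

lemma num_points_le_eta0:
  fixes F :: "expo \<Rightarrow> 'a::{field,finite}"
  defines "q \<equiv> card (UNIV :: 'a set)"
  assumes F: "in_R 0 dT dX F" and "0 \<le> dT" and nf: "non_filling F"
  shows "num_points F \<le> min (nat dT) q * (q + 1) + (q + 1 - min (nat dT) q) * min dX q"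
proof (rule num_points_le_by_fibres[of F, folded q_def])
  obtain t0 x0 where t0: "t0 \<in> proj_line" "x0 \<in> proj_line" "eval_at F t0 x0 \<noteq> 0"
    using nf non_filling_iff_eval_at by blast
  have "card {t \<in> proj_line. \<forall>x\<in>proj_line. eval_at F t x = 0} \<le> card {t \<in> proj_line. eval_at F t x0 = 0}"
    using t0 by (intro card_mono) auto
  also have "\<dots> \<le> nat dT"
    by (rule binary_form_card_zeros_le[OF binary_form_eval_at_section[OF F \<open>0 \<le> dT\<close>]]) (use t0 in auto)
  finally show "card {t \<in> proj_line. \<forall>x\<in>proj_line. eval_at F t x = 0} \<le> min (nat dT) q"
    using card_proj_line_Collect_less[of t0 "\<lambda>t. \<forall>x\<in>proj_line. eval_at F t x = 0"] t0
    by (auto simp: q_def)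
next
  fix t assume "t \<in> proj_line" "\<exists>x\<in>proj_line. eval_at F t x \<noteq> 0"
  then obtain x1 where x1: "x1 \<in> proj_line" "eval_at F t x1 \<noteq> 0" by blast
  show "card {x \<in> proj_line. eval_at F t x = 0} \<le> min dX q"
    using binary_form_card_zeros_le[OF binary_form_eval_at_fibre[OF F] x1]
      card_proj_line_Collect_less[of x1 "\<lambda>x. eval_at F t x = 0"] x1 by (auto simp: q_def)
qed auto

lemma num_points_le_fibre_degree:
  fixes F :: "expo \<Rightarrow> 'a::{field,finite}"
  defines "q \<equiv> card (UNIV :: 'a set)"
  assumes F: "in_R \<eta> dT dX F" and "dX \<le> q" and nf: "non_filling F"
  shows "num_points F \<le> q * (q + 1) + dX"
proof -
  have "num_points F \<le> q * (q + 1) + (q + 1 - q) * dX"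
  proof (rule num_points_le_by_fibres[of F, folded q_def])
    obtain t0 x0 where "t0 \<in> proj_line" "x0 \<in> proj_line" "eval_at F t0 x0 \<noteq> 0"
      using nf non_filling_iff_eval_at by blast
    then show "card {t \<in> proj_line. \<forall>x\<in>proj_line. eval_at F t x = 0} \<le> q"
      unfolding q_def by (intro card_proj_line_Collect_less) auto
  next
    fix t assume "t \<in> proj_line" "\<exists>x\<in>proj_line. eval_at F t x \<noteq> 0"
    then obtain x1 where "x1 \<in> proj_line" "eval_at F t x1 \<noteq> 0" by blast
    then show "card {x \<in> proj_line. eval_at F t x = 0} \<le> dX"
      by (rule binary_form_card_zeros_le[OF binary_form_eval_at_fibre[OF F]])
  qed (use \<open>dX \<le> q\<close> in auto)
  then show ?thesis by simp
qed

lemma num_points_le_dX0: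
  fixes F :: "expo \<Rightarrow> 'a::{field,finite}"
  defines "q \<equiv> card (UNIV :: 'a set)"
  assumes F: "in_R \<eta> dT 0 F" and "0 \<le> dT" and nf: "non_filling F"
  shows "num_points F \<le> nat dT * (q + 1)"
proof -
  have const: "eval_at F t x = xcoeff \<eta> dT 0 F 0 t" for t x
    by (simp add: eval_at_eq_sum_xcoeff[OF F])
  have "binary_form (nat dT) (xcoeff \<eta> dT 0 F 0)"
    using binary_form_xcoeff[of dT \<eta> 0] \<open>0 \<le> dT\<close> by (simp add: xcoeff_deg_def)
  moreover obtain t0 where "t0 \<in> proj_line" "xcoeff \<eta> dT 0 F 0 t0 \<noteq> 0"
    using nf by (auto simp: non_filling_iff_eval_at const)
  ultimately have "card {t \<in> proj_line. xcoeff \<eta> dT 0 F 0 t = 0} \<le> nat dT"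
    by (rule binary_form_card_zeros_le)
  moreover have "num_points F = (\<Sum>t\<in>proj_line. if xcoeff \<eta> dT 0 F 0 t = 0 then q + 1 else 0)"
    unfolding num_points_eq_sum_fibres const by (intro sum.cong) (auto simp: card_proj_line q_def)
  then have "num_points F = card {t \<in> proj_line. xcoeff \<eta> dT 0 F 0 t = 0} * (q + 1)"
    by (simp add: sum.If_cases Int_def)
  ultimately show ?thesis by (simp only: mult_le_mono1)
qed

lemma sum_card_affine_zeros_le:
  fixes F :: "expo \<Rightarrow> 'a::{field,finite}" and \<eta> v :: nat and dT :: int
  defines "q \<equiv> card (UNIV :: 'a set)" and "w \<equiv> min (xcoeff_deg \<eta> dT v) (card (UNIV :: 'a set))"
  assumes F: "in_R \<eta> dT dX F" and v: "lowest_xcoeff \<eta> dT dX F v" and "dX - v \<le> q"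
  shows "(\<Sum>t\<in>proj_line. card {y. eval_at F t (1, y) = 0}) \<le> w * q + (q + 1 - w) * (dX - v)"
proof -
  have "(\<Sum>t\<in>proj_line. card {y. eval_at F t (1, y) = 0})
      \<le> w * q + (card (proj_line :: ('a \<times> 'a) set) - w) * (dX - v)"
  proof (rule sum_le_two_bounds[where R = "{t \<in> proj_line. xcoeff \<eta> dT dX F v t = 0}"])
    fix t assume "t \<in> proj_line - {t \<in> proj_line. xcoeff \<eta> dT dX F v t = 0}"
    then show "card {y. eval_at F t (1, y) = 0} \<le> dX - v"
      using v by (intro card_affine_zeros_le[OF F]) (auto simp: lowest_xcoeff_def)
  qed (use card_xcoeff_zeros_le[OF v] assms card_Collect_le_card_UNIV in \<open>auto simp: card_proj_line\<close>)
  then show ?thesis by (simp add: card_proj_line q_def)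
qed

lemma sum_card_affine_zeros_le_total:
  "(\<Sum>t\<in>(proj_line :: ('a::{field,finite} \<times> 'a) set). card {y :: 'a. P t y})
    \<le> (card (UNIV :: 'a set) + 1) * card (UNIV :: 'a set)"
proof -
  have "(\<Sum>t\<in>(proj_line :: ('a \<times> 'a) set). card {y. P t y}) \<le> (\<Sum>t\<in>(proj_line :: ('a \<times> 'a) set). card (UNIV :: 'a set))"
    by (intro sum_mono card_Collect_le_card_UNIV)
  then show ?thesis by (simp add: card_proj_line)
qed

lemma num_points_le_small_degree:
  fixes F :: "expo \<Rightarrow> 'a::{field,finite}"
  defines "q \<equiv> card (UNIV :: 'a set)"
  assumes F: "in_R \<eta> dT dX F" and "2 \<le> \<eta>" and d: "dT + int \<eta> * int dX < int q" and nf: "non_filling F"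
  shows "int (num_points F) \<le> int q * (dT + int \<eta> * int dX + 1) + 1"
proof -
  obtain v where v: "lowest_xcoeff \<eta> dT dX F v" using lowest_xcoeff_exists[OF F nf] ..
  define w where "w = xcoeff_deg \<eta> dT v"
  define e where "e = dX - v"
  have wd: "int w + int \<eta> * int e = dT + int \<eta> * int dX"
    unfolding w_def e_def by (rule lowest_xcoeff_degree_split[OF v])
  have "int e \<le> int \<eta> * int e" using \<open>2 \<le> \<eta>\<close> by (simp add: mult_le_cancel_right1)
  then have "e \<le> q" "w < q" using wd d by linarith+
  then have "num_points F \<le> (q + 1) + (w * q + (q + 1 - w) * e)"
    using num_points_eq_infinity_plus_affine[OF F] sum_card_affine_zeros_le[OF F v]
      card_proj_line_Collect_le[of "\<lambda>t. xcoeff \<eta> dT dX F 0 t = 0"]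
    by (simp add: w_def e_def q_def)
  then have "int (num_points F) \<le> int ((q + 1) + (w * q + (q + 1 - w) * e))"
    by (simp only: of_nat_le_iff)
  also have "\<dots> = int q + 1 + int w * int q + (int q + 1 - int w) * int e"
    using \<open>w < q\<close> by (simp add: of_nat_diff)
  also have "\<dots> = int q * (int w + int \<eta> * int e + 1) + 1 + int e * (int q + 1 - int w - int \<eta> * int q)"
    by (simp add: algebra_simps)
  also have "\<dots> \<le> int q * (int w + int \<eta> * int e + 1) + 1"
  proof -
    have "2 * int q \<le> int \<eta> * int q" using \<open>2 \<le> \<eta>\<close> by (intro mult_right_mono) auto
    then have "int q + 1 - int w - int \<eta> * int q \<le> 0" using \<open>w < q\<close> by linarith
    then show ?thesis by (simp add: mult_nonneg_nonpos)
  qed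
  finally show ?thesis using wd by simp
qed

section \<open>Fibres of degree at least q\<close>

lemma power_card_UNIV_field: "(x :: 'a::{field,finite}) ^ card (UNIV :: 'a set) = x"
proof (cases "x = 0")
  case True
  then show ?thesis using card_UNIV_field_ge2[where 'a='a] by simp
next
  case False
  let ?S = "UNIV - {0::'a}"
  have "bij_betw (\<lambda>y. x * y) ?S ?S"
    unfolding bij_betw_def inj_on_def using False
    by (auto intro!: image_eqI[where x="inverse x * _"] simp: field_simps)
  then have "(\<Prod>y\<in>?S. x * y) = (\<Prod>y\<in>?S. y)"
    using prod.reindex_bij_betw[of "\<lambda>y. x * y" ?S ?S "\<lambda>y. y"] by simp
  moreover have "(\<Prod>y\<in>?S. x * y) = x ^ card ?S * (\<Prod>y\<in>?S. y)"
    by (simp add: prod.distrib)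
  moreover have "(\<Prod>y\<in>?S. y) \<noteq> 0" by (simp add: prod_zero_iff)
  ultimately have "x ^ card ?S = 1" by simp
  moreover have "card ?S + 1 = card (UNIV :: 'a set)"
    using card_UNIV_field_ge2[where 'a='a] by (simp add: card_Diff_subset)
  ultimately show ?thesis by (metis power_add power_one_right mult_1)
qed

text \<open>On a field with q elements y^m = y^(m - (q - 1)) for m \<ge> q; if m < 2 q - 1 a single such
  step brings the exponent below q.\<close>

definition reduce_exp :: "nat \<Rightarrow> nat \<Rightarrow> nat" where
  "reduce_exp q m = (if q \<le> m then m - (q - 1) else m)"

lemma power_reduce_exp: "(y :: 'a::{field,finite}) ^ reduce_exp (card (UNIV :: 'a set)) m = y ^ m"
proof (cases "card (UNIV :: 'a set) \<le> m")
  case True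
  let ?q = "card (UNIV :: 'a set)"
  have "y ^ m = y ^ (m - ?q) * y ^ ?q" using True by (simp flip: power_add)
  also have "\<dots> = y ^ (m - ?q + 1)" by (simp add: power_card_UNIV_field)
  also have "m - ?q + 1 = m - (?q - 1)" using True card_UNIV_field_ge2[where 'a='a] by simp
  finally show ?thesis using True by (simp add: reduce_exp_def)
qed (simp add: reduce_exp_def)

definition reduced_poly :: "nat \<Rightarrow> nat \<Rightarrow> (nat \<Rightarrow> 'a::comm_ring_1) \<Rightarrow> 'a poly" where
  "reduced_poly q e g = (\<Sum>i\<le>e. monom (g i) (reduce_exp q (e - i)))"

lemma poly_reduced_poly:
  "poly (reduced_poly (card (UNIV :: 'a set)) e g) y = (\<Sum>i\<le>e. g i * (y :: 'a::{field,finite}) ^ (e - i))"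
  unfolding reduced_poly_def by (simp add: poly_sum poly_monom power_reduce_exp)

lemma coeff_reduced_poly_high:
  assumes "e = q + s" "s + 2 \<le> q" "q \<le> k"
  shows "coeff (reduced_poly q e g) k = 0"
  unfolding reduced_poly_def coeff_sum coeff_monom
  by (rule sum.neutral) (use assms in \<open>auto simp: reduce_exp_def\<close>)

lemma coeff_reduced_poly_mid:
  assumes "e = q + s" "s + 2 \<le> k" "k < q"
  shows "coeff (reduced_poly q e g) k = g (e - k)"
proof -
  have "coeff (reduced_poly q e g) k = (\<Sum>i\<le>e. if i = e - k then g i else 0)"
    unfolding reduced_poly_def coeff_sum coeff_monom
    by (rule sum.cong) (use assms in \<open>auto simp: reduce_exp_def\<close>)
  also have "\<dots> = g (e - k)" using assms by (auto simp: sum.delta)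
  finally show ?thesis .
qed

lemma degree_reduced_poly_le:
  assumes "e = q + s" "s + u + 2 \<le> q" "\<And>u'. u' < u \<Longrightarrow> g (s + 1 + u') = 0"
  shows "degree (reduced_poly q e g) \<le> q - 1 - u"
proof (rule degree_le, intro allI impI)
  fix k assume k: "q - 1 - u < k"
  show "coeff (reduced_poly q e g) k = 0"
  proof (cases "q \<le> k")
    case True
    with assms(2) show ?thesis by (intro coeff_reduced_poly_high[OF assms(1)]) auto
  next
    case False
    then have "coeff (reduced_poly q e g) k = g (s + 1 + (q - 1 - k))"
      using assms k by (subst coeff_reduced_poly_mid) (auto intro: arg_cong[where f = g])
    also have "\<dots> = 0" using assms k False by (intro assms(3)) auto
    finally show ?thesis .
  qed
qed

lemma sum_atMost_drop_zeros:
  fixes f :: "nat \<Rightarrow> 'a::comm_monoid_add"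
  assumes "v \<le> N" "\<And>j. j < v \<Longrightarrow> f j = 0"
  shows "(\<Sum>j\<le>N. f j) = (\<Sum>i\<le>N - v. f (v + i))"
proof -
  have "(\<Sum>j\<le>N. f j) = (\<Sum>j\<in>{v..N}. f j)"
    by (rule sum.mono_neutral_right) (use assms in auto)
  also have "\<dots> = (\<Sum>i\<in>{0..N - v}. f (i + v))"
    using sum.shift_bounds_cl_nat_ivl[of f 0 v "N - v"] assms(1) by simp
  finally show ?thesis by (simp add: atLeast0AtMost add.commute)
qed

text \<open>The affine equation of the fibre over t with all exponents reduced below q, for
  q \<le> dX - v \<le> 2 q - 2.\<close>

definition reduced_fibre :: "nat \<Rightarrow> int \<Rightarrow> nat \<Rightarrow> (expo \<Rightarrow> 'a::{field,finite}) \<Rightarrow> nat \<Rightarrow> 'a \<times> 'a \<Rightarrow> 'a poly" where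
  "reduced_fibre \<eta> dT dX F v t =
     reduced_poly (card (UNIV :: 'a set)) (dX - v) (\<lambda>i. xcoeff \<eta> dT dX F (v + i) t)"

lemma poly_reduced_fibre:
  fixes F :: "expo \<Rightarrow> 'a::{field,finite}"
  assumes F: "in_R \<eta> dT dX F" and v: "lowest_xcoeff \<eta> dT dX F v" and t: "t \<in> proj_line"
  shows "poly (reduced_fibre \<eta> dT dX F v t) y = eval_at F t (1, y)"
proof -
  have "eval_at F t (1, y) = (\<Sum>i\<le>dX - v. xcoeff \<eta> dT dX F (v + i) t * y ^ (dX - v - i))"
    unfolding eval_at_affine[OF F] using v t
    by (subst sum_atMost_drop_zeros[where v = v]) (auto simp: lowest_xcoeff_def)
  then show ?thesis by (simp add: reduced_fibre_def poly_reduced_poly)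
qed

lemma card_affine_zeros_le_degree:
  fixes F :: "expo \<Rightarrow> 'a::{field,finite}"
  assumes "in_R \<eta> dT dX F" "lowest_xcoeff \<eta> dT dX F v" "t \<in> proj_line"
    and "reduced_fibre \<eta> dT dX F v t \<noteq> 0"
  shows "card {y. eval_at F t (1, y) = 0} \<le> degree (reduced_fibre \<eta> dT dX F v t)"
  using card_poly_roots_bound[OF assms(4)] by (simp add: poly_reduced_fibre[OF assms(1-3)])

lemma degree_reduced_fibre_le:
  fixes F :: "expo \<Rightarrow> 'a::{field,finite}"
  assumes "dX - v = card (UNIV :: 'a set) + s" "s + u + 2 \<le> card (UNIV :: 'a set)"
    and "\<And>u'. u' < u \<Longrightarrow> xcoeff \<eta> dT dX F (v + (s + 1 + u')) t = 0"
  shows "degree (reduced_fibre \<eta> dT dX F v t) \<le> card (UNIV :: 'a set) - 1 - u"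
  unfolding reduced_fibre_def by (rule degree_reduced_poly_le) (use assms in auto)

lemma coeff_reduced_fibre:
  fixes F :: "expo \<Rightarrow> 'a::{field,finite}"
  assumes "dX - v = card (UNIV :: 'a set) + s" "s + u + 3 \<le> card (UNIV :: 'a set)"
  shows "coeff (reduced_fibre \<eta> dT dX F v t) (card (UNIV :: 'a set) - 1 - u)
    = xcoeff \<eta> dT dX F (v + (s + 1 + u)) t"
proof -
  have "dX - v - (card (UNIV :: 'a set) - 1 - u) = s + 1 + u" using assms by simp
  then show ?thesis
    unfolding reduced_fibre_def using assms by (subst coeff_reduced_poly_mid[OF assms(1)]) auto
qed

lemma sum_proj_line_le_deficit:
  fixes f :: "'a::{field,finite} \<times> 'a \<Rightarrow> nat"
  defines "q \<equiv> card (UNIV :: 'a set)"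
  assumes "N \<subseteq> proj_line" "L \<le> card N" "L \<le> q + 1" "\<And>t. t \<in> N \<Longrightarrow> f t \<le> K"
    and "\<And>t. t \<in> proj_line \<Longrightarrow> f t \<le> q" "K \<le> q"
  shows "int (\<Sum>t\<in>proj_line. f t) \<le> int q * (int q + 1) - int L * (int q - int K)"
proof -
  have "card (proj_line - N) \<le> q + 1 - L"
    using assms by (simp add: card_Diff_subset finite_subset card_proj_line)
  then have "(\<Sum>t\<in>proj_line. f t) \<le> (q + 1 - L) * q + (card (proj_line :: ('a \<times> 'a) set) - (q + 1 - L)) * K"
    by (intro sum_le_two_bounds) (use assms in \<open>auto simp: card_proj_line\<close>)
  then have "(\<Sum>t\<in>proj_line. f t) \<le> (q + 1 - L) * q + L * K"
    using assms(4) by (simp add: card_proj_line q_def)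
  then have "int (\<Sum>t\<in>proj_line. f t) \<le> int ((q + 1 - L) * q + L * K)"
    by (simp only: of_nat_le_iff)
  also have "\<dots> = (int q + 1 - int L) * int q + int L * int K"
    using assms(4) by (simp add: of_nat_diff)
  also have "\<dots> = int q * (int q + 1) - int L * (int q - int K)"
    by (simp add: algebra_simps)
  finally show ?thesis .
qed

lemma sum_card_affine_zeros_le_vanishing:
  fixes F :: "expo \<Rightarrow> 'a::{field,finite}"
  defines "q \<equiv> card (UNIV :: 'a set)"
  assumes F: "in_R \<eta> dT dX F" and nf: "non_filling F" and v: "lowest_xcoeff \<eta> dT dX F v" "1 \<le> v"
    and e: "dX - v = q + s" "s + 2 \<le> q"
    and vanish: "\<And>u t. s + u + 3 \<le> q \<Longrightarrow> t \<in> proj_line \<Longrightarrow> xcoeff \<eta> dT dX F (v + (s + 1 + u)) t = 0"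
  shows "int (\<Sum>t\<in>proj_line. card {y. eval_at F t (1, y) = 0}) \<le> int q * (int q + 1) - (int q - int s - 1)"
proof -
  obtain t1 y1 where t1: "t1 \<in> proj_line" "eval_at F t1 (1, y1) \<noteq> 0"
  proof -
    obtain t x where t: "t \<in> proj_line" "x \<in> proj_line" "eval_at F t x \<noteq> 0"
      using nf non_filling_iff_eval_at by blast
    moreover have "eval_at F t (0, 1) = 0"
      using v \<open>t \<in> proj_line\<close> by (simp add: eval_at_infinity[OF F] lowest_xcoeff_def)
    ultimately show ?thesis using that by (cases rule: proj_line_cases[OF t(2)]) auto
  qed
  then have "reduced_fibre \<eta> dT dX F v t1 \<noteq> 0"
    using poly_reduced_fibre[OF F v(1) t1(1)] by (metis poly_0)
  moreover have vanish_t1: "xcoeff \<eta> dT dX F (v + (s + 1 + u)) t1 = 0" if "u < q - 2 - s" for u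
    using that by (intro vanish t1(1)) simp
  have "degree (reduced_fibre \<eta> dT dX F v t1) \<le> q - 1 - (q - 2 - s)"
    unfolding q_def by (rule degree_reduced_fibre_le) (use e vanish_t1 in \<open>auto simp: q_def\<close>)
  ultimately have "card {y. eval_at F t1 (1, y) = 0} \<le> s + 1"
    using card_affine_zeros_le_degree[OF F v(1) t1(1)] e by simp
  then have "int (\<Sum>t\<in>proj_line. card {y. eval_at F t (1, y) = 0}) \<le> int q * (int q + 1) - int 1 * (int q - int (s + 1))"
    by (intro sum_proj_line_le_deficit[of "{t1}", folded q_def])
      (use t1 e card_Collect_le_card_UNIV in \<open>auto simp: q_def\<close>)
  then show ?thesis by simp
qed

lemma sum_card_affine_zeros_le_first_high:
  fixes F :: "expo \<Rightarrow> 'a::{field,finite}" and \<eta> v s u :: nat and dT :: int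
  defines "q \<equiv> card (UNIV :: 'a set)" and "V \<equiv> v + (s + 1 + u)"
  assumes F: "in_R \<eta> dT dX F" and v: "lowest_xcoeff \<eta> dT dX F v"
    and e: "dX - v = q + s" "s + u + 3 \<le> q"
    and below: "\<And>u' t. u' < u \<Longrightarrow> t \<in> proj_line \<Longrightarrow> xcoeff \<eta> dT dX F (v + (s + 1 + u')) t = 0"
    and t0: "t0 \<in> proj_line" "xcoeff \<eta> dT dX F V t0 \<noteq> 0"
  shows "int (\<Sum>t\<in>proj_line. card {y. eval_at F t (1, y) = 0})
    \<le> int q * (int q + 1) - max 1 (int q + 1 - int (xcoeff_deg \<eta> dT V)) * (int u + 1)"
proof -
  let ?N = "{t \<in> proj_line. xcoeff \<eta> dT dX F V t \<noteq> 0}"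
  define L where "L = max 1 (q + 1 - xcoeff_deg \<eta> dT V)"
  have "0 \<le> dT + int \<eta> * int V" using t0(2) xcoeff_neg by (meson not_le)
  then have "card {t \<in> proj_line. xcoeff \<eta> dT dX F V t = 0} \<le> xcoeff_deg \<eta> dT V"
    using binary_form_card_zeros_le[OF binary_form_xcoeff t0] by blast
  moreover have "card ?N = q + 1 - card {t \<in> proj_line. xcoeff \<eta> dT dX F V t = 0}"
  proof -
    have "?N = proj_line - {t \<in> proj_line. xcoeff \<eta> dT dX F V t = 0}" by auto
    then show ?thesis by (simp add: card_Diff_subset card_proj_line q_def)
  qed
  moreover have "?N \<noteq> {}" using t0 by blast
  then have "1 \<le> card ?N" by (simp add: Suc_le_eq card_gt_0_iff)
  ultimately have "L \<le> card ?N" unfolding L_def by linarith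
  have "card {y. eval_at F t (1, y) = 0} \<le> q - 1 - u" if "t \<in> ?N" for t
  proof -
    have "coeff (reduced_fibre \<eta> dT dX F v t) (q - 1 - u) \<noteq> 0"
      using coeff_reduced_fibre[where F = F and t = t, OF e[unfolded q_def]] that
      by (simp add: q_def V_def)
    then have "reduced_fibre \<eta> dT dX F v t \<noteq> 0" by auto
    moreover have "degree (reduced_fibre \<eta> dT dX F v t) \<le> q - 1 - u"
      unfolding q_def
      by (rule degree_reduced_fibre_le) (use e below[of _ t] that in \<open>auto simp: q_def\<close>)
    ultimately show ?thesis using card_affine_zeros_le_degree[OF F v] that by fastforce
  qed
  then have "int (\<Sum>t\<in>proj_line. card {y. eval_at F t (1, y) = 0}) \<le> int q * (int q + 1) - int L * (int q - int (q - 1 - u))"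
    by (intro sum_proj_line_le_deficit[of ?N, folded q_def])
      (use \<open>L \<le> card ?N\<close> card_Collect_le_card_UNIV e in \<open>auto simp: L_def q_def\<close>)
  moreover have "int q - int (q - 1 - u) = int u + 1" using e by simp
  moreover have "int L = max 1 (int q + 1 - int (xcoeff_deg \<eta> dT V))" unfolding L_def by auto
  ultimately show ?thesis by (simp only:)
qed

lemma ceiling_div_bounds:
  fixes a b :: int
  assumes "0 < b"
  shows "b * (- (- a div b) - 1) < a" "a \<le> b * (- (- a div b))"
proof -
  have eq: "b * (- a div b) = - a - (- a) mod b" using mult_div_mod_eq[of b "- a"] by linarith
  have "0 \<le> (- a) mod b" "(- a) mod b < b" using assms by simp_all
  moreover have "b * (- (- a div b) - 1) = - (b * (- a div b)) - b" "b * (- (- a div b)) = - (b * (- a div b))"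
    by (simp_all add: algebra_simps)
  ultimately show "b * (- (- a div b) - 1) < a" "a \<le> b * (- (- a div b))"
    using eq by linarith+
qed

lemma le_max_0_of_mult_pred_less:
  fixes \<eta> c a :: int
  assumes "1 \<le> \<eta>" "\<eta> * (c - 1) < a"
  shows "c \<le> max 0 a"
proof (cases "c \<le> 0")
  case False
  then have "c - 1 \<le> \<eta> * (c - 1)" using mult_right_mono[of 1 \<eta> "c - 1"] assms(1) by simp
  then show ?thesis using assms(2) by simp
qed simp

lemma deficit_lower_bound:
  fixes \<eta> c w q n s u :: int
  assumes "1 \<le> \<eta>" "0 \<le> u" "n = w + \<eta> * (s + 1 + u)" "\<eta> * (c - 1) < q - w"
  shows "c - s \<le> max 1 (q + 1 - n) * (u + 1)"
proof (cases "c \<le> s + 1 + u")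
  case True
  have "u + 1 \<le> max 1 (q + 1 - n) * (u + 1)"
    using mult_right_mono[of 1 "max 1 (q + 1 - n)" "u + 1"] assms(2) by simp
  then show ?thesis using True by linarith
next
  case False
  define b where "b = c - 1 - (s + 1 + u)"
  have "0 \<le> b" using False b_def by simp
  have "\<eta> * (c - 1) = \<eta> * (s + 1 + u) + \<eta> * b" unfolding b_def by (simp add: algebra_simps)
  then have "\<eta> * b + 2 \<le> max 1 (q + 1 - n)" using assms(3,4) by linarith
  then have "(\<eta> * b + 2) * (u + 1) \<le> max 1 (q + 1 - n) * (u + 1)"
    using assms(2) by (intro mult_right_mono) auto
  moreover have "b \<le> \<eta> * b * (u + 1)"
  proof -
    have "1 * 1 \<le> \<eta> * (u + 1)" using assms(1,2) by (intro mult_mono) auto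
    from mult_left_mono[OF this \<open>0 \<le> b\<close>] show ?thesis by (simp add: algebra_simps)
  qed
  ultimately show ?thesis unfolding b_def using assms(2) by (simp add: algebra_simps)
qed

lemma deficit_parameter_bounds:
  fixes \<eta> q s w :: nat and c :: int
  assumes "2 \<le> \<eta>" "2 \<le> q" "int \<eta> * int s < int q - int w"
    and "int \<eta> * (c - 1) < int q - int w" "int q - int w \<le> int \<eta> * c"
  shows "s + 2 \<le> q" "int s + 1 \<le> c" "c \<le> int q - 1"
proof -
  have "2 * int s \<le> int \<eta> * int s" using assms(1) by (intro mult_right_mono) auto
  then have "2 * s < q" using assms(3) by linarith
  then show "s + 2 \<le> q" using assms(2) by presburger
  show "int s + 1 \<le> c"
  proof (rule ccontr)
    assume "\<not> ?thesis"
    then have "int \<eta> * c \<le> int \<eta> * int s" by (intro mult_left_mono) auto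
    then show False using assms(3,5) by linarith
  qed
  then have "2 * (c - 1) \<le> int \<eta> * (c - 1)" using assms(1) by (intro mult_right_mono) auto
  then have "2 * (c - 1) < int q" using assms(4) by linarith
  then show "c \<le> int q - 1" using assms(2) by presburger
qed

lemma sum_card_affine_zeros_le_high:
  fixes F :: "expo \<Rightarrow> 'a::{field,finite}" and \<eta> v s :: nat and dT c :: int
  defines "q \<equiv> card (UNIV :: 'a set)" and "w \<equiv> xcoeff_deg \<eta> dT v"
  assumes F: "in_R \<eta> dT dX F" and nf: "non_filling F" and "2 \<le> \<eta>"
    and v: "lowest_xcoeff \<eta> dT dX F v" "1 \<le> v" and e: "dX - v = q + s"
    and hs: "int \<eta> * int s < int q - int w"
    and c: "int \<eta> * (c - 1) < int q - int w" "int q - int w \<le> int \<eta> * c"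
  shows "int (\<Sum>t\<in>proj_line. card {y. eval_at F t (1, y) = 0}) \<le> int q * (int q + 1) - (c - int s)"
proof -
  have "2 \<le> q" unfolding q_def by (rule card_UNIV_field_ge2)
  note bounds = deficit_parameter_bounds[OF \<open>2 \<le> \<eta>\<close> this hs c]
  have s: "s + 2 \<le> q" by (rule bounds(1))
  show ?thesis
  proof (cases "\<exists>u. s + u + 3 \<le> q \<and> (\<exists>t\<in>proj_line. xcoeff \<eta> dT dX F (v + (s + 1 + u)) t \<noteq> 0)")
    case False
    have "c - int s \<le> int q - int s - 1" using bounds(3) by simp
    moreover have "int (\<Sum>t\<in>proj_line. card {y. eval_at F t (1, y) = 0}) \<le> int q * (int q + 1) - (int q - int s - 1)"
      unfolding q_def
      by (rule sum_card_affine_zeros_le_vanishing[OF F nf v e[unfolded q_def] s[unfolded q_def]])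
        (use False in \<open>auto simp: q_def\<close>)
    ultimately show ?thesis by linarith
  next
    case True
    then obtain u where u: "s + u + 3 \<le> q" "\<exists>t\<in>proj_line. xcoeff \<eta> dT dX F (v + (s + 1 + u)) t \<noteq> 0"
      and least: "\<And>u'. u' < u \<Longrightarrow>
        \<not> (s + u' + 3 \<le> q \<and> (\<exists>t\<in>proj_line. xcoeff \<eta> dT dX F (v + (s + 1 + u')) t \<noteq> 0))"
      unfolding exists_least_iff[of "\<lambda>u. s + u + 3 \<le> q \<and> _ u"] by blast
    have below: "xcoeff \<eta> dT dX F (v + (s + 1 + u')) t = 0" if "u' < u" "t \<in> proj_line" for u' t
      using least[OF that(1)] that u(1) by auto
    obtain t0 where t0: "t0 \<in> proj_line" "xcoeff \<eta> dT dX F (v + (s + 1 + u)) t0 \<noteq> 0" using u(2) ..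
    have "int (xcoeff_deg \<eta> dT (v + (s + 1 + u))) = int w + int \<eta> * (int s + 1 + int u)"
      using xcoeff_deg_add[OF lowest_xcoeff_deg_nonneg[OF v(1)], of "s + 1 + u"] by (simp add: w_def)
    then have "c - int s \<le> max 1 (int q + 1 - int (xcoeff_deg \<eta> dT (v + (s + 1 + u)))) * (int u + 1)"
      using \<open>2 \<le> \<eta>\<close> by (intro deficit_lower_bound[OF _ _ _ c(1)]) auto
    with sum_card_affine_zeros_le_first_high[OF F v(1) e[unfolded q_def] u(1)[unfolded q_def] below t0]
    show ?thesis by (simp add: q_def)
  qed
qed

lemma num_points_le_mid_low:
  fixes F :: "expo \<Rightarrow> 'a::{field,finite}" and \<eta> v dX :: nat and dT c :: int
  defines "q \<equiv> card (UNIV :: 'a set)" and "w \<equiv> xcoeff_deg \<eta> dT v" and "e \<equiv> dX - v"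
  assumes F: "in_R \<eta> dT dX F" and "1 \<le> \<eta>" and v: "lowest_xcoeff \<eta> dT dX F v" and "e < q"
    and c: "int \<eta> * (c - 1) < int q - int w"
  shows "int (num_points F) \<le> int q ^ 2 + int q + 1 + int e - c"
proof -
  define w' where "w' = min w q"
  have "num_points F \<le> (q + 1) + (w' * q + (q + 1 - w') * e)"
    using num_points_eq_infinity_plus_affine[OF F] sum_card_affine_zeros_le[OF F v] \<open>e < q\<close>
      card_proj_line_Collect_le[of "\<lambda>t. xcoeff \<eta> dT dX F 0 t = 0"]
    by (simp add: w'_def w_def e_def q_def)
  then have "int (num_points F) \<le> int ((q + 1) + (w' * q + (q + 1 - w') * e))"
    by (simp only: of_nat_le_iff)
  also have "\<dots> = int q + 1 + int w' * int q + (int q + 1 - int w') * int e"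
    by (simp add: w'_def of_nat_diff)
  also have "\<dots> = int q ^ 2 + int q + 1 + int e - (int q - int w') * (int q - int e)"
    by (simp add: algebra_simps power2_eq_square)
  also have "\<dots> \<le> int q ^ 2 + int q + 1 + int e - c"
  proof -
    have "int q - int w' = max 0 (int q - int w)" by (simp add: w'_def max_def min_def)
    then have "c \<le> int q - int w'" using le_max_0_of_mult_pred_less[OF _ c] \<open>1 \<le> \<eta>\<close> by simp
    moreover have "int q - int w' \<le> (int q - int w') * (int q - int e)"
      using mult_left_mono[of 1 "int q - int e" "int q - int w'"] \<open>e < q\<close> by (simp add: w'_def)
    ultimately show ?thesis by linarith
  qed
  finally show ?thesis .
qed

lemma num_points_le_mid_high:
  fixes F :: "expo \<Rightarrow> 'a::{field,finite}" and \<eta> v dX :: nat and dT c :: int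
  defines "q \<equiv> card (UNIV :: 'a set)" and "w \<equiv> xcoeff_deg \<eta> dT v" and "e \<equiv> dX - v"
  assumes F: "in_R \<eta> dT dX F" and nf: "non_filling F" and "2 \<le> \<eta>" and v: "lowest_xcoeff \<eta> dT dX F v"
    and "q \<le> e" and d: "int w + int \<eta> * int e < (int \<eta> + 1) * int q"
    and c: "int \<eta> * (c - 1) < int q - int w" "int q - int w \<le> int \<eta> * c"
  shows "int (num_points F) \<le> int q ^ 2 + int q + 1 + int e - c"
proof -
  let ?S0 = "card {t \<in> proj_line. xcoeff \<eta> dT dX F 0 t = 0}"
  let ?SA = "\<Sum>t\<in>proj_line. card {y. eval_at F t (1, y) = 0}"
  have num: "num_points F = ?S0 + ?SA" by (rule num_points_eq_infinity_plus_affine[OF F])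
  have "c \<le> max 0 (int q - int w)" using le_max_0_of_mult_pred_less[OF _ c(1)] \<open>2 \<le> \<eta>\<close> by simp
  consider (large) "q \<le> w" | (base) "w < q" "v = 0" | (raised) "w < q" "1 \<le> v" by linarith
  then show ?thesis
  proof cases
    case large
    have "int (num_points F) \<le> int ((q + 1) * (q + 1))"
      using num_points_le_square[of F] by (simp only: of_nat_le_iff q_def)
    then show ?thesis using \<open>q \<le> e\<close> \<open>c \<le> max 0 (int q - int w)\<close> large
      by (simp add: algebra_simps power2_eq_square)
  next
    case base
    have "?S0 \<le> w" using card_xcoeff_zeros_le[OF v] base by (simp add: w_def)
    then have "num_points F \<le> w + (q + 1) * q"
      using num sum_card_affine_zeros_le_total[of "\<lambda>t y. eval_at F t (1, y) = 0"] by (simp add: q_def)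
    then have "int (num_points F) \<le> int (w + (q + 1) * q)" by (simp only: of_nat_le_iff)
    then show ?thesis using \<open>q \<le> e\<close> \<open>c \<le> max 0 (int q - int w)\<close> base
      by (simp add: algebra_simps power2_eq_square)
  next
    case raised
    define s where "s = e - q"
    have e': "dX - v = q + s" using \<open>q \<le> e\<close> by (simp add: s_def e_def)
    have "int \<eta> * int s < int q - int w"
      using d \<open>q \<le> e\<close> by (simp add: s_def of_nat_diff algebra_simps)
    then have "int ?SA \<le> int q * (int q + 1) - (c - int s)"
      using sum_card_affine_zeros_le_high[OF F nf \<open>2 \<le> \<eta>\<close> v raised(2) e'[unfolded q_def]] c
      by (simp add: q_def w_def)
    moreover have "?S0 \<le> q + 1" unfolding q_def by (rule card_proj_line_Collect_le)
    ultimately show ?thesis using num \<open>q \<le> e\<close> by (simp add: s_def of_nat_diff algebra_simps power2_eq_square)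
  qed
qed

lemma num_points_le_mid_degree:
  fixes F :: "expo \<Rightarrow> 'a::{field,finite}" and \<eta> dX :: nat and dT :: int
  defines "q \<equiv> card (UNIV :: 'a set)" and "d \<equiv> dT + int \<eta> * int dX"
  assumes F: "in_R \<eta> dT dX F" and nf: "non_filling F" and "2 \<le> \<eta>" and d: "d < (int \<eta> + 1) * int q"
  shows "int (num_points F) \<le> int q ^ 2 + int q + 1 + (d - int q) div int \<eta>"
proof -
  obtain v where v: "lowest_xcoeff \<eta> dT dX F v" using lowest_xcoeff_exists[OF F nf] ..
  define w where "w = xcoeff_deg \<eta> dT v"
  define e where "e = dX - v"
  have wd: "int w + int \<eta> * int e = d"
    unfolding w_def e_def d_def by (rule lowest_xcoeff_degree_split[OF v])
  define c where "c = - ((int w - int q) div int \<eta>)" \<comment> \<open>the ceiling of (q - w) / \<eta>\<close>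
  have c: "int \<eta> * (c - 1) < int q - int w" "int q - int w \<le> int \<eta> * c"
    using ceiling_div_bounds[of "int \<eta>" "int q - int w"] \<open>2 \<le> \<eta>\<close> by (simp_all add: c_def)
  have "d - int q = (int w - int q) + int e * int \<eta>" using wd by (simp add: algebra_simps)
  then have "(d - int q) div int \<eta> = ((int w - int q) + int e * int \<eta>) div int \<eta>" by (rule arg_cong)
  also have "\<dots> = int e + (int w - int q) div int \<eta>"
    by (rule div_mult_self1) (use \<open>2 \<le> \<eta>\<close> in simp)
  also have "\<dots> = int e - c" by (simp add: c_def)
  finally have div: "(d - int q) div int \<eta> = int e - c" .
  have "int (num_points F) \<le> int q ^ 2 + int q + 1 + int e - c"
  proof (cases "e < q")
    case True
    then show ?thesis using num_points_le_mid_low[OF F _ v] c \<open>2 \<le> \<eta>\<close> by (simp add: q_def w_def e_def)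
  next
    case False
    then show ?thesis using num_points_le_mid_high[OF F nf \<open>2 \<le> \<eta>\<close> v] c d wd
      by (simp add: q_def w_def e_def)
  qed
  then show ?thesis using div by simp
qed

section \<open>Curves attaining the bounds\<close>

text \<open>The coefficient function of X1^k * p(T1, T2) * r(T2^\<eta> X1, X2), where p and r are
  homogenised to degrees n1 and n2.\<close>

definition model_poly :: "nat \<Rightarrow> nat \<Rightarrow> nat \<Rightarrow> nat \<Rightarrow> 'a::comm_ring_1 poly \<Rightarrow> 'a poly \<Rightarrow> expo \<Rightarrow> 'a" where
  "model_poly \<eta> k n1 n2 p r = (\<lambda>(c1, c2, d1, d2).
     if d2 \<le> n2 \<and> d1 = k + (n2 - d2) \<and> c1 + c2 = n1 + \<eta> * (n2 - d2) \<and> \<eta> * (n2 - d2) \<le> c2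
     then coeff p (c2 - \<eta> * (n2 - d2)) * coeff r d2 else 0)"

lemma in_R_model_poly:
  assumes "dT = int n1 - int \<eta> * int k" "dX = k + n2"
  shows "in_R \<eta> dT dX (model_poly \<eta> k n1 n2 p r)"
  unfolding in_R_def
proof (intro allI impI)
  fix m assume "model_poly \<eta> k n1 n2 p r m \<noteq> 0"
  moreover obtain c1 c2 d1 d2 where m: "m = (c1, c2, d1, d2)" by (cases m)
  ultimately have h: "d2 \<le> n2" "d1 = k + (n2 - d2)" "c1 + c2 = n1 + \<eta> * (n2 - d2)"
    unfolding model_poly_def by (auto split: if_splits)
  then have "int c1 + int c2 = int n1 + int \<eta> * int (n2 - d2)" by (metis of_nat_add of_nat_mult)
  with h show "bideg \<eta> m = (dT, dX)"
    unfolding m bideg_def assms by (simp add: algebra_simps)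
qed

lemma eval_poly_model_poly:
  fixes p r :: "'a::comm_ring_1 poly"
  assumes "degree p \<le> n1"
  shows "eval_poly (model_poly \<eta> k n1 n2 p r) (t1, t2, x1, x2)
    = x1 ^ k * homog n1 p (t1, t2) * homog n2 r (t2 ^ \<eta> * x1, x2)"
proof -
  let ?F = "model_poly \<eta> k n1 n2 p r"
  define I where "I = {..n1} \<times> {..n2}"
  define mon where "mon = (\<lambda>(j, i). (n1 - j, j + \<eta> * (n2 - i), k + (n2 - i), i))"
  define g where "g = (\<lambda>m. case m of (c1, c2, d1, d2) \<Rightarrow> ?F m * t1 ^ c1 * t2 ^ c2 * x1 ^ d1 * x2 ^ d2)"
  have support: "{m. ?F m \<noteq> 0} \<subseteq> mon ` I"
  proof
    fix m assume "m \<in> {m. ?F m \<noteq> 0}"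
    moreover obtain c1 c2 d1 d2 where m: "m = (c1, c2, d1, d2)" by (cases m)
    ultimately have h: "d2 \<le> n2" "d1 = k + (n2 - d2)" "c1 + c2 = n1 + \<eta> * (n2 - d2)"
      "\<eta> * (n2 - d2) \<le> c2" "coeff p (c2 - \<eta> * (n2 - d2)) \<noteq> 0"
      unfolding model_poly_def by (auto split: if_splits)
    then have "c2 - \<eta> * (n2 - d2) \<le> n1" using assms le_degree order.trans by blast
    with h have "(c2 - \<eta> * (n2 - d2), d2) \<in> I" "mon (c2 - \<eta> * (n2 - d2), d2) = m"
      unfolding I_def mon_def m by auto
    then show "m \<in> mon ` I" by (metis image_eqI)
  qed
  have "inj_on mon I" unfolding inj_on_def mon_def I_def by auto
  have "eval_poly ?F (t1, t2, x1, x2) = sum g {m. ?F m \<noteq> 0}"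
    unfolding eval_poly_def g_def by simp
  also have "\<dots> = sum g (mon ` I)"
    by (rule sum.mono_neutral_left) (use support in \<open>auto simp: I_def g_def split: prod.splits\<close>)
  also have "\<dots> = sum (g \<circ> mon) I" by (rule sum.reindex[OF \<open>inj_on mon I\<close>])
  also have "\<dots> = (\<Sum>(j, i)\<in>I. x1 ^ k * (coeff p j * t1 ^ (n1 - j) * t2 ^ j) *
      (coeff r i * (t2 ^ \<eta> * x1) ^ (n2 - i) * x2 ^ i))"
  proof (rule sum.cong[OF refl])
    fix ji assume "ji \<in> I"
    then obtain j i where ji: "ji = (j, i)" "j \<le> n1" "i \<le> n2" unfolding I_def by auto
    then have "?F (mon (j, i)) = coeff p j * coeff r i" unfolding model_poly_def mon_def by auto
    then show "(g \<circ> mon) ji = (case ji of (j, i) \<Rightarrow> x1 ^ k * (coeff p j * t1 ^ (n1 - j) * t2 ^ j) *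
        (coeff r i * (t2 ^ \<eta> * x1) ^ (n2 - i) * x2 ^ i))"
      unfolding ji g_def mon_def by (simp add: power_add power_mult_distrib mult_ac flip: power_mult)
  qed
  also have "\<dots> = x1 ^ k * homog n1 p (t1, t2) * homog n2 r (t2 ^ \<eta> * x1, x2)"
    unfolding I_def sum.cartesian_product[symmetric] homog_def
    by (simp add: sum_distrib_left sum_distrib_right) (rule sum.swap)
  finally show ?thesis .
qed

lemma eval_at_model_poly:
  "degree p \<le> n1 \<Longrightarrow> eval_at (model_poly \<eta> k n1 n2 p r) t x
    = fst x ^ k * homog n1 p t * homog n2 r (snd t ^ \<eta> * fst x, snd x)"
  unfolding eval_at_def hirz_pt_def
  using eval_poly_model_poly[of p n1 \<eta> k n2 r "fst t" "snd t" "fst x" "snd x"] by simp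

lemma card_fibre_model_poly:
  fixes p r :: "'a::{field,finite} poly"
  assumes p: "degree p \<le> n1" and r: "degree r \<le> n2" "coeff r n2 = 1"
    and untwisted: "\<eta> = 0 \<or> n2 = 0 \<or> (\<forall>a. poly p a = 0)"
    and t: "t \<in> proj_line" "homog n1 p t \<noteq> 0"
  shows "card {x \<in> proj_line. eval_at (model_poly \<eta> k n1 n2 p r) t x = 0}
    = card {b. poly r b = 0} + (if 1 \<le> k then 1 else 0)"
proof -
  have "homog n2 r (snd t ^ \<eta>, b) = poly r b" for b
    using untwisted
  proof (elim disjE)
    assume "n2 = 0"
    then show ?thesis using poly_eq_sum_atMost[OF r(1), of b] by (simp add: homog_def)
  next
    assume "\<forall>a. poly p a = 0"
    then have "t = (0, 1)" using t by (cases rule: proj_line_cases[OF t(1)]) (auto simp: homog_affine[OF p])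
    then show ?thesis by (simp add: homog_affine[OF r(1)])
  qed (simp add: homog_affine[OF r(1)])
  then have "{b. eval_at (model_poly \<eta> k n1 n2 p r) t (1, b) = 0} = {b. poly r b = 0}"
    using t(2) by (auto simp: eval_at_model_poly[OF p])
  moreover have "eval_at (model_poly \<eta> k n1 n2 p r) t (0, 1) = 0 \<longleftrightarrow> 1 \<le> k"
    using t(2) r(2) by (auto simp: eval_at_model_poly[OF p] homog_infinity power_0_left)
  ultimately show ?thesis by (simp add: card_proj_line_zeros)
qed

lemma num_points_model_poly:
  fixes p r :: "'a::{field,finite} poly"
  defines "q \<equiv> card (UNIV :: 'a set)"
  assumes p: "degree p \<le> n1" "coeff p n1 = 1" and r: "degree r \<le> n2" "coeff r n2 = 1"
    and untwisted: "\<eta> = 0 \<or> n2 = 0 \<or> (\<forall>a. poly p a = 0)"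
  shows "num_points (model_poly \<eta> k n1 n2 p r) = card {a. poly p a = 0} * (q + 1)
    + (q + 1 - card {a. poly p a = 0}) * (card {b. poly r b = 0} + (if 1 \<le> k then 1 else 0))"
proof -
  let ?N = "\<lambda>t. card {x \<in> proj_line. eval_at (model_poly \<eta> k n1 n2 p r) t x = 0}"
  let ?Z = "{t \<in> (proj_line :: ('a \<times> 'a) set). homog n1 p t = 0}"
  have full: "?N t = q + 1" if "t \<in> ?Z" for t
  proof -
    have "{x \<in> proj_line. eval_at (model_poly \<eta> k n1 n2 p r) t x = 0} = proj_line"
      using that by (auto simp: eval_at_model_poly[OF p(1)])
    then show ?thesis by (simp add: card_proj_line q_def)
  qed
  have regular: "?N t = card {b. poly r b = 0} + (if 1 \<le> k then 1 else 0)" if "t \<in> proj_line - ?Z" for t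
    using that by (intro card_fibre_model_poly[OF p(1) r untwisted]) auto
  have "num_points (model_poly \<eta> k n1 n2 p r) = (\<Sum>t\<in>?Z. ?N t) + (\<Sum>t\<in>proj_line - ?Z. ?N t)"
    unfolding num_points_eq_sum_fibres using sum.subset_diff[of ?Z proj_line ?N] by (simp add: add.commute)
  also have "\<dots> = card ?Z * (q + 1) + card (proj_line - ?Z) * (card {b. poly r b = 0} + (if 1 \<le> k then 1 else 0))"
    using full regular by simp
  also have "card (proj_line - ?Z) = q + 1 - card ?Z" by (simp add: card_Diff_subset card_proj_line q_def)
  also have "card ?Z = card {a. poly p a = 0}" using card_homog_zeros[OF p(1)] p(2) by simp
  finally show ?thesis .
qed

lemma non_filling_model_poly_infinity:
  fixes p r :: "'a::{field,finite} poly"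
  assumes "degree p \<le> n1" "coeff p n1 = 1" "coeff r n2 = 1"
  shows "non_filling (model_poly \<eta> 0 n1 n2 p r)"
  unfolding non_filling_iff_eval_at
  by (rule bexI[of _ "(0, 1)"], rule bexI[of _ "(0, 1)"])
     (use assms in \<open>auto simp: eval_at_model_poly homog_infinity\<close>)

lemma non_filling_model_poly_affine:
  fixes p r :: "'a::{field,finite} poly"
  assumes "degree p \<le> n1" "coeff p n1 = 1" "degree r \<le> n2" "poly r b \<noteq> 0"
  shows "non_filling (model_poly \<eta> k n1 n2 p r)"
  unfolding non_filling_iff_eval_at
  by (rule bexI[of _ "(0, 1)"], rule bexI[of _ "(1, b)"])
     (use assms in \<open>auto simp: eval_at_model_poly homog_infinity homog_affine\<close>)

lemma obtain_poly_card_zeros: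
  obtains p :: "'a::{field,finite} poly"
  where "degree p \<le> n" "coeff p n = 1" "card {a. poly p a = 0} = min n (card (UNIV :: 'a set))"
proof -
  have "min n (card (UNIV :: 'a set)) \<le> card (UNIV :: 'a set)" by simp
  then obtain S :: "'a set" where S: "card S = min n (card (UNIV :: 'a set))"
    using obtain_subset_with_card_n by metis
  show ?thesis
  proof (cases "S = {}")
    case True
    then have "n = 0" using S card_UNIV_field_ge2[where 'a='a] by auto
    then show ?thesis using True S that[of 1] by auto
  next
    case False
    then obtain s0 where "s0 \<in> S" by auto
    define p where "p = (\<Prod>s\<in>S. [:- s, 1:]) * [:- s0, 1:] ^ (n - card S)"
    have "degree p = card S + (n - card S)"
      unfolding p_def by (subst degree_mult_eq) (auto simp: degree_prod_eq_sum_degree degree_power_eq)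
    then have "degree p = n" using S by auto
    moreover have "lead_coeff p = 1" unfolding p_def by (simp add: lead_coeff_mult lead_coeff_prod lead_coeff_power)
    moreover have "{a. poly p a = 0} = S" unfolding p_def using \<open>s0 \<in> S\<close> by (auto simp: poly_prod)
    ultimately show ?thesis using S that[of p] by auto
  qed
qed

lemma obtain_poly_card_zeros_eq:
  assumes "n \<le> card (UNIV :: 'a set)"
  obtains p :: "'a::{field,finite} poly" where "degree p \<le> n" "coeff p n = 1" "card {a. poly p a = 0} = n"
  using obtain_poly_card_zeros[of n] assms by (metis min_absorb1)

lemma obtain_poly_all_zeros:
  assumes "card (UNIV :: 'a set) \<le> n"
  obtains p :: "'a::{field,finite} poly" where "degree p \<le> n" "coeff p n = 1" "\<forall>a. poly p a = 0"
proof -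
  obtain p :: "'a poly" where p: "degree p \<le> n" "coeff p n = 1" "card {a. poly p a = 0} = card (UNIV :: 'a set)"
    using obtain_poly_card_zeros[of n] assms by (metis min_absorb2)
  then have "{a. poly p a = 0} = UNIV" by (metis card_subset_eq finite_UNIV subset_UNIV)
  with p that show ?thesis by auto
qed

lemma sharp_boundI:
  assumes "\<And>F :: expo \<Rightarrow> 'a::{field,finite}. in_R \<eta> dT dX F \<Longrightarrow> non_filling F \<Longrightarrow> int (num_points F) \<le> B"
    and "in_R \<eta> dT dX (G :: expo \<Rightarrow> 'a)" "non_filling G" "int (num_points G) = B"
  shows "sharp_bound TYPE('a) \<eta> dT dX B"
  unfolding sharp_bound_def using assms by blast

lemma sharp_bound_eta0:
  fixes dT :: int and dX :: nat
  defines "q \<equiv> int (card (UNIV :: 'a::{field,finite} set))"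
  assumes "0 \<le> dT"
  shows "sharp_bound TYPE('a) 0 dT dX ((q + 1)^2 - max (q - int dX + 1) 1 * max (q - dT + 1) 1)"
proof -
  define Q where "Q = card (UNIV :: 'a set)"
  define a where "a = min (nat dT) Q"
  define b where "b = min dX Q"
  obtain p :: "'a poly" where p: "degree p \<le> nat dT" "coeff p (nat dT) = 1" "card {a. poly p a = 0} = a"
    unfolding a_def Q_def by (rule obtain_poly_card_zeros)
  obtain r :: "'a poly" where r: "degree r \<le> dX" "coeff r dX = 1" "card {a. poly r a = 0} = b"
    unfolding b_def Q_def by (rule obtain_poly_card_zeros)
  have "int (Q + 1 - a) = int Q + 1 - int a" by (simp add: a_def of_nat_diff)
  then have "int (a * (Q + 1) + (Q + 1 - a) * b) = int a * (int Q + 1) + (int Q + 1 - int a) * int b"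
    by (simp only: of_nat_add of_nat_mult of_nat_1)
  also have "\<dots> = (q + 1)^2 - (int Q + 1 - int b) * (int Q + 1 - int a)"
    by (simp add: q_def Q_def algebra_simps power2_eq_square)
  finally have "int (a * (Q + 1) + (Q + 1 - a) * b) = (q + 1)^2 - (int Q + 1 - int b) * (int Q + 1 - int a)" .
  moreover have "int Q + 1 - int b = max (q - int dX + 1) 1" "int Q + 1 - int a = max (q - dT + 1) 1"
    using \<open>0 \<le> dT\<close> by (auto simp: q_def Q_def a_def b_def max_def min_def)
  ultimately have B: "int (a * (Q + 1) + (Q + 1 - a) * b) = (q + 1)^2 - max (q - int dX + 1) 1 * max (q - dT + 1) 1"
    by (simp only:)
  show ?thesis
  proof (rule sharp_boundI[where G = "model_poly 0 0 (nat dT) dX p r"])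
    fix F :: "expo \<Rightarrow> 'a" assume "in_R 0 dT dX F" "non_filling F"
    then have "num_points F \<le> a * (Q + 1) + (Q + 1 - a) * b"
      using num_points_le_eta0[of dT dX F] \<open>0 \<le> dT\<close> by (simp add: a_def b_def Q_def)
    then show "int (num_points F) \<le> (q + 1)^2 - max (q - int dX + 1) 1 * max (q - dT + 1) 1"
      unfolding B[symmetric] by (simp only: of_nat_le_iff)
  qed (use \<open>0 \<le> dT\<close> p r B in \<open>auto simp: in_R_model_poly non_filling_model_poly_infinity num_points_model_poly Q_def\<close>)
qed

lemma sharp_bound_small_degree:
  fixes dT :: int and \<eta> dX :: nat
  defines "q \<equiv> int (card (UNIV :: 'a::{field,finite} set))" and "d \<equiv> dT + int \<eta> * int dX"
  assumes "2 \<le> \<eta>" "0 \<le> d" "d < q"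
  shows "sharp_bound TYPE('a) \<eta> dT dX (if dX = 0 \<and> 0 \<le> dT then (q + 1) * dT else q * (d + 1) + 1)"
proof -
  have "nat d \<le> card (UNIV :: 'a set)" using \<open>d < q\<close> by (simp add: q_def)
  then obtain p :: "'a poly" where p: "degree p \<le> nat d" "coeff p (nat d) = 1" "card {a. poly p a = 0} = nat d"
    by (rule obtain_poly_card_zeros_eq)
  show ?thesis
  proof (cases "dX = 0")
    case True
    then have "d = dT" by (simp add: d_def)
    show ?thesis
    proof (rule sharp_boundI[where G = "model_poly \<eta> 0 (nat dT) 0 p 1"])
      fix F :: "expo \<Rightarrow> 'a" assume "in_R \<eta> dT dX F" "non_filling F"
      then have "num_points F \<le> nat dT * (card (UNIV :: 'a set) + 1)"
        using num_points_le_dX0[of \<eta> dT F] True \<open>0 \<le> d\<close> \<open>d = dT\<close> by simp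
      then have "int (num_points F) \<le> int (nat dT * (card (UNIV :: 'a set) + 1))"
        by (simp only: of_nat_le_iff)
      then show "int (num_points F) \<le> (if dX = 0 \<and> 0 \<le> dT then (q + 1) * dT else q * (d + 1) + 1)"
        using True \<open>0 \<le> d\<close> \<open>d = dT\<close> by (simp add: q_def algebra_simps)
    qed (use True \<open>0 \<le> d\<close> \<open>d = dT\<close> p in
        \<open>auto simp: in_R_model_poly non_filling_model_poly_infinity num_points_model_poly q_def algebra_simps\<close>)
  next
    case False
    have "int (nat d * (card (UNIV :: 'a set) + 1) + (card (UNIV :: 'a set) + 1 - nat d)) = q * (d + 1) + 1"
      using \<open>0 \<le> d\<close> \<open>d < q\<close> by (simp add: q_def of_nat_diff algebra_simps)
    then show ?thesis
    proof (intro sharp_boundI[where G = "model_poly \<eta> dX (nat d) 0 p 1"])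
      fix F :: "expo \<Rightarrow> 'a" assume "in_R \<eta> dT dX F" "non_filling F"
      then show "int (num_points F) \<le> (if dX = 0 \<and> 0 \<le> dT then (q + 1) * dT else q * (d + 1) + 1)"
        using num_points_le_small_degree[of \<eta> dT dX F] False \<open>2 \<le> \<eta>\<close> \<open>d < q\<close> by (simp add: q_def d_def)
    qed (use False \<open>0 \<le> d\<close> p in
        \<open>auto simp: d_def in_R_model_poly num_points_model_poly intro: non_filling_model_poly_affine[of _ _ _ _ 0]\<close>)
  qed
qed

lemma sharp_bound_fibre_degree:
  fixes dT :: int and \<eta> dX :: nat
  defines "q \<equiv> int (card (UNIV :: 'a::{field,finite} set))"
  assumes "q \<le> dT" "int dX \<le> q"
  shows "sharp_bound TYPE('a) \<eta> dT dX (q^2 + q + int dX)"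
proof -
  have "card (UNIV :: 'a set) \<le> nat dT" using \<open>q \<le> dT\<close> by (simp add: q_def)
  then obtain p :: "'a poly" where p: "degree p \<le> nat dT" "coeff p (nat dT) = 1" "\<forall>a. poly p a = 0"
    by (rule obtain_poly_all_zeros)
  have "dX \<le> card (UNIV :: 'a set)" using \<open>int dX \<le> q\<close> by (simp add: q_def)
  then obtain r :: "'a poly" where r: "degree r \<le> dX" "coeff r dX = 1" "card {a. poly r a = 0} = dX"
    by (rule obtain_poly_card_zeros_eq)
  show ?thesis
  proof (rule sharp_boundI[where G = "model_poly \<eta> 0 (nat dT) dX p r"])
    fix F :: "expo \<Rightarrow> 'a" assume "in_R \<eta> dT dX F" "non_filling F"
    then have "num_points F \<le> card (UNIV :: 'a set) * (card (UNIV :: 'a set) + 1) + dX"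
      using num_points_le_fibre_degree[of \<eta> dT dX F] \<open>int dX \<le> q\<close> by (simp add: q_def)
    then have "int (num_points F) \<le> int (card (UNIV :: 'a set) * (card (UNIV :: 'a set) + 1) + dX)"
      by (simp only: of_nat_le_iff)
    then show "int (num_points F) \<le> q^2 + q + int dX"
      by (simp add: q_def algebra_simps power2_eq_square)
  qed (use \<open>q \<le> dT\<close> p r in
      \<open>auto simp: q_def in_R_model_poly non_filling_model_poly_infinity num_points_model_poly
        algebra_simps power2_eq_square\<close>)
qed

text \<open>k is the least twist with dT + \<eta> k \<ge> q, which lets the extremal curve use a p vanishing on
  the whole affine T-line; what is left of dX is then less than q.\<close>

lemma obtain_mid_degree_split:
  fixes dT q :: int and \<eta> dX :: nat
  defines "d \<equiv> dT + int \<eta> * int dX"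
  assumes "2 \<le> \<eta>" "dT < q" "d < (int \<eta> + 1) * q" "q \<le> d"
  obtains k n2 :: nat where "1 \<le> k" "dX = k + n2" "q \<le> dT + int \<eta> * int k" "int n2 < q"
    "int n2 = (d - q) div int \<eta>"
proof -
  define k where "k = - ((dT - q) div int \<eta>)"
  have k: "int \<eta> * (k - 1) < q - dT" "q - dT \<le> int \<eta> * k"
    using ceiling_div_bounds[of "int \<eta>" "q - dT"] \<open>2 \<le> \<eta>\<close> by (simp_all add: k_def)
  have "1 \<le> k"
  proof (rule ccontr)
    assume "\<not> 1 \<le> k"
    then have "int \<eta> * k \<le> 0" by (simp add: mult_nonneg_nonpos)
    then show False using k(2) \<open>dT < q\<close> by linarith
  qed
  define n2 where "n2 = (d - q) div int \<eta>"
  have "d - q = (dT - q) + int dX * int \<eta>" by (simp add: d_def algebra_simps)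
  then have "n2 = ((dT - q) + int dX * int \<eta>) div int \<eta>" unfolding n2_def by (rule arg_cong)
  also have "\<dots> = int dX - k" using \<open>2 \<le> \<eta>\<close> by (simp add: k_def)
  finally have "n2 = int dX - k" .
  have "0 \<le> n2" using \<open>q \<le> d\<close> \<open>2 \<le> \<eta>\<close> by (simp add: n2_def div_int_pos_iff)
  have "int \<eta> * n2 \<le> d - q" using ceiling_div_bounds(2)[of "int \<eta>" "q - d"] \<open>2 \<le> \<eta>\<close>
    by (simp add: n2_def)
  moreover have "(int \<eta> + 1) * q = int \<eta> * q + q" by (simp add: algebra_simps)
  ultimately have "int \<eta> * n2 < int \<eta> * q" using \<open>d < (int \<eta> + 1) * q\<close> by linarith
  then have "n2 < q" using \<open>2 \<le> \<eta>\<close> by (simp add: mult_less_cancel_left_pos)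
  show ?thesis
    by (rule that[of "nat k" "nat n2"]) (use k \<open>1 \<le> k\<close> \<open>0 \<le> n2\<close> \<open>n2 = int dX - k\<close> \<open>n2 < q\<close> in \<open>auto simp: n2_def\<close>)
qed

lemma sharp_bound_mid_degree:
  fixes dT :: int and \<eta> dX :: nat
  defines "q \<equiv> int (card (UNIV :: 'a::{field,finite} set))" and "d \<equiv> dT + int \<eta> * int dX"
  assumes "2 \<le> \<eta>" "dT < q" "d < (int \<eta> + 1) * q" "q \<le> d"
  shows "sharp_bound TYPE('a) \<eta> dT dX (q^2 + q + 1 + (d - q) div int \<eta>)"
proof -
  obtain k n2 :: nat where k: "1 \<le> k" "dX = k + n2" "q \<le> dT + int \<eta> * int k" "int n2 < q"
    "int n2 = (d - q) div int \<eta>"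
    using obtain_mid_degree_split[of \<eta> dT q dX] assms(3-6) unfolding d_def by blast
  define n1 where "n1 = nat (dT + int \<eta> * int k)"
  have "card (UNIV :: 'a set) \<le> n1" using k(3) by (simp add: q_def n1_def)
  then obtain p :: "'a poly" where p: "degree p \<le> n1" "coeff p n1 = 1" "\<forall>a. poly p a = 0"
    by (rule obtain_poly_all_zeros)
  have "n2 \<le> card (UNIV :: 'a set)" using k(4) by (simp add: q_def)
  then obtain r :: "'a poly" where r: "degree r \<le> n2" "coeff r n2 = 1" "card {a. poly r a = 0} = n2"
    by (rule obtain_poly_card_zeros_eq)
  have "{a. poly r a = 0} \<noteq> UNIV" using r(3) k(4) by (auto simp: q_def)
  then obtain b where "poly r b \<noteq> 0" by auto
  show ?thesis
  proof (rule sharp_boundI[where G = "model_poly \<eta> k n1 n2 p r"])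
    fix F :: "expo \<Rightarrow> 'a" assume "in_R \<eta> dT dX F" "non_filling F"
    then show "int (num_points F) \<le> q^2 + q + 1 + (d - q) div int \<eta>"
      using num_points_le_mid_degree[of \<eta> dT dX F] \<open>2 \<le> \<eta>\<close> \<open>d < (int \<eta> + 1) * q\<close>
      by (simp add: q_def d_def)
  next
    show "in_R \<eta> dT dX (model_poly \<eta> k n1 n2 p r)"
      using k(2,3) by (intro in_R_model_poly) (auto simp: n1_def q_def)
    show "non_filling (model_poly \<eta> k n1 n2 p r)"
      using p r \<open>poly r b \<noteq> 0\<close> by (intro non_filling_model_poly_affine) auto
    have "num_points (model_poly \<eta> k n1 n2 p r) = card (UNIV :: 'a set) * (card (UNIV :: 'a set) + 1) + (n2 + 1)"
      using num_points_model_poly[OF p(1,2) r(1,2)] p(3) r(3) k(1) by simp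
    then show "int (num_points (model_poly \<eta> k n1 n2 p r)) = q^2 + q + 1 + (d - q) div int \<eta>"
      using k(5) unfolding q_def by (simp add: algebra_simps power2_eq_square)
  qed
qed

lemma real_max_less_iff:
  fixes d dT q :: int and m :: nat
  assumes "0 < m"
  shows "max (real_of_int d / real m) (real_of_int dT) < real_of_int q \<longleftrightarrow> dT < q \<and> d < int m * q"
proof -
  have "real_of_int d / real m < real_of_int q \<longleftrightarrow> real_of_int d < real_of_int (int m * q)"
    using assms by (simp add: pos_divide_less_eq mult.commute)
  then show ?thesis unfolding max_less_iff_conj of_int_less_iff by blast
qed

theorem corollary5p1:
  fixes \<eta> :: nat and dT :: int and dX :: nat
  assumes "\<eta> \<noteq> 1"
    and "dT + int \<eta> * int dX \<ge> 0"
  defines "q \<equiv> int (card (UNIV :: 'a::{field,finite} set))"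
  defines "d \<equiv> dT + int \<eta> * int dX"
  shows
   "(\<eta> \<ge> 2 \<longrightarrow>
      (q > d \<longrightarrow>
         sharp_bound TYPE('a) \<eta> dT dX
           (if dX = 0 \<and> dT \<ge> 0 then (q + 1) * dT else q * (d + 1) + 1)) \<and>
      (max (real_of_int d / real (\<eta> + 1)) (real_of_int dT) < real_of_int q \<and> q \<le> d \<longrightarrow>
         sharp_bound TYPE('a) \<eta> dT dX
           (q^2 + q + 1 + \<lfloor>real_of_int (d - q) / real \<eta>\<rfloor>)) \<and>
      (real_of_int q \<le> max (real_of_int d / real (\<eta> + 1)) (real_of_int dT) \<and> q \<ge> int dX \<longrightarrow>
         sharp_bound TYPE('a) \<eta> dT dX (q^2 + q + int dX))) \<and>
    (\<eta> = 0 \<longrightarrow>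
      sharp_bound TYPE('a) \<eta> dT dX
        ((q + 1)^2 - max (q - int dX + 1) 1 * max (q - dT + 1) 1))"
proof (intro conjI impI)
  have max_iff: "max (real_of_int d / real (\<eta> + 1)) (real_of_int dT) < real_of_int q
      \<longleftrightarrow> dT < q \<and> d < (int \<eta> + 1) * q"
    using real_max_less_iff[of "\<eta> + 1" d dT q] by (simp add: add.commute)
  show "sharp_bound TYPE('a) \<eta> dT dX (if dX = 0 \<and> dT \<ge> 0 then (q + 1) * dT else q * (d + 1) + 1)"
    if "2 \<le> \<eta>" "d < q"
    using sharp_bound_small_degree[where 'a = 'a, of \<eta> dT dX] that assms(2) unfolding q_def d_def by blast
  show "sharp_bound TYPE('a) \<eta> dT dX (q^2 + q + 1 + \<lfloor>real_of_int (d - q) / real \<eta>\<rfloor>)"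
    if "2 \<le> \<eta>" "max (real_of_int d / real (\<eta> + 1)) (real_of_int dT) < real_of_int q \<and> q \<le> d"
  proof -
    have "\<lfloor>real_of_int (d - q) / real \<eta>\<rfloor> = (d - q) div int \<eta>"
      using floor_divide_of_int_eq[of "d - q" "int \<eta>"] by simp
    then show ?thesis using sharp_bound_mid_degree[where 'a = 'a, of \<eta> dT dX] that max_iff
      unfolding q_def d_def by simp
  qed
  show "sharp_bound TYPE('a) \<eta> dT dX (q^2 + q + int dX)"
    if "real_of_int q \<le> max (real_of_int d / real (\<eta> + 1)) (real_of_int dT) \<and> q \<ge> int dX"
  proof -
    have "int \<eta> * int dX \<le> int \<eta> * q" using that by (intro mult_left_mono) auto
    then have "q \<le> dT" using that max_iff by (auto simp: d_def algebra_simps)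
    then show ?thesis using sharp_bound_fibre_degree[where 'a = 'a, of dT dX \<eta>] that by (simp add: q_def)
  qed
  show "sharp_bound TYPE('a) \<eta> dT dX ((q + 1)^2 - max (q - int dX + 1) 1 * max (q - dT + 1) 1)"
    if "\<eta> = 0"
    using sharp_bound_eta0[where 'a = 'a, of dT dX] that assms(2) by (simp add: q_def)
qed

end
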